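(* Let $l\in\frac12\mathbb N$ and let $V$ be a simple weight $\mathfrak g^{(l)}$-module such that $\mathrm{supp}(V)\subseteq\lambda+\mathbb Z$ for some $\lambda\in\mathbb C$ with $0<\dim V_\lambda<\infty$, and such that $\mathcal HV\ne0$. (i) If $V$ is not a highest (resp. lowest) weight module, then $e$ (resp. $f$) acts injectively on $V$. (ii) If $V$ is neither a highest nor a lowest weight module, then both $e$ and $f$ act bijectively on $V$; consequently, for every $\mu\in\mathrm{supp}(V)$ one has $\dim V_{\mu+2i}=\dim V_\mu$ for all $i\in\mathbb Z$, and if moreover $l\in\mathbb N-\frac12$ then $\dim V_{\mu+i}=\dim V_\mu$ for all $i\in\mathbb Z$.
   Context: For $l\in\frac12\mathbb N$, $\mathfrak g^{(l)}$ is the complex Lie algebra with basis $e,h,f,p_0,\dots,p_{2l}$ and brackets $[h,e]=2e$, $[h,f]=-2f$, $[e,f]=h$, $[h,p_k]=2(l-k)p_k$, $[e,p_k]=kp_{k-1}$, $[f,p_k]=(2l-k)p_{k+1}$ ($p_{-1}=p_{2l+1}=0$), $[p_k,p_{k'}]=0$. $\mathcal H=\mathrm{span}\{p_0,\dots,p_{2l}\}$. A weight module is one on which $h$ acts diagonalizably, $V_\lambda=\{v:hv=\lambda v\}$, $\mathrm{supp}(V)=\{\lambda:V_\lambda\ne0\}$. A highest (resp. lowest) weight module is one generated by a weight vector $v$ annihilated by $e$ and all $p_k$ with $k<l$ (resp. by $f$ and all $p_k$ with $k>l$), which for $l\in\mathbb N$ is moreover an eigenvector of $p_l$. *)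

theory Defs
  imports "HOL-Analysis.Analysis"
begin

text \<open>Modules over g^(l), with n = 2l.  The module is the whole type 'v, a complex
  vector space with scalar multiplication s.  The action is given by the operators
  E, H, F and P k (k = 0..n).\<close>

definition gmod :: "nat \<Rightarrow> (complex \<Rightarrow> 'v::ab_group_add \<Rightarrow> 'v) \<Rightarrow> ('v \<Rightarrow> 'v) \<Rightarrow> ('v \<Rightarrow> 'v)
    \<Rightarrow> ('v \<Rightarrow> 'v) \<Rightarrow> (nat \<Rightarrow> 'v \<Rightarrow> 'v) \<Rightarrow> bool" where
  "gmod n s E H F P \<longleftrightarrow>
     vector_space s \<and>
     Vector_Spaces.linear s s E \<and> Vector_Spaces.linear s s H \<and> Vector_Spaces.linear s s F \<and>
     (\<forall>k\<le>n. Vector_Spaces.linear s s (P k)) \<and>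
     (\<forall>v. H (E v) - E (H v) = s 2 (E v)) \<and>
     (\<forall>v. H (F v) - F (H v) = s (-2) (F v)) \<and>
     (\<forall>v. E (F v) - F (E v) = H v) \<and>
     (\<forall>k\<le>n. \<forall>v. H (P k v) - P k (H v) = s (of_int (int n - 2 * int k)) (P k v)) \<and>
     (\<forall>k\<le>n. \<forall>v. E (P k v) - P k (E v) = (if k = 0 then 0 else s (of_nat k) (P (k - 1) v))) \<and>
     (\<forall>k\<le>n. \<forall>v. F (P k v) - P k (F v) = (if k = n then 0 else s (of_nat (n - k)) (P (k + 1) v))) \<and>
     (\<forall>k\<le>n. \<forall>k'\<le>n. \<forall>v. P k (P k' v) = P k' (P k v))"

definition submod :: "nat \<Rightarrow> (complex \<Rightarrow> 'v::ab_group_add \<Rightarrow> 'v) \<Rightarrow> ('v \<Rightarrow> 'v) \<Rightarrow> ('v \<Rightarrow> 'v)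
    \<Rightarrow> ('v \<Rightarrow> 'v) \<Rightarrow> (nat \<Rightarrow> 'v \<Rightarrow> 'v) \<Rightarrow> 'v set \<Rightarrow> bool" where
  "submod n s E H F P W \<longleftrightarrow> module.subspace s W \<and> E ` W \<subseteq> W \<and> H ` W \<subseteq> W \<and> F ` W \<subseteq> W \<and>
     (\<forall>k\<le>n. P k ` W \<subseteq> W)"

definition simple_mod :: "nat \<Rightarrow> (complex \<Rightarrow> 'v::ab_group_add \<Rightarrow> 'v) \<Rightarrow> ('v \<Rightarrow> 'v) \<Rightarrow> ('v \<Rightarrow> 'v)
    \<Rightarrow> ('v \<Rightarrow> 'v) \<Rightarrow> (nat \<Rightarrow> 'v \<Rightarrow> 'v) \<Rightarrow> bool" where
  "simple_mod n s E H F P \<longleftrightarrow> (\<exists>v::'v. v \<noteq> 0) \<and>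
     (\<forall>W. submod n s E H F P W \<longrightarrow> W = {0} \<or> W = UNIV)"

definition generated_by :: "nat \<Rightarrow> (complex \<Rightarrow> 'v::ab_group_add \<Rightarrow> 'v) \<Rightarrow> ('v \<Rightarrow> 'v) \<Rightarrow> ('v \<Rightarrow> 'v)
    \<Rightarrow> ('v \<Rightarrow> 'v) \<Rightarrow> (nat \<Rightarrow> 'v \<Rightarrow> 'v) \<Rightarrow> 'v \<Rightarrow> bool" where
  "generated_by n s E H F P v \<longleftrightarrow> \<Inter>{W. submod n s E H F P W \<and> v \<in> W} = UNIV"

definition wspace :: "(complex \<Rightarrow> 'v::ab_group_add \<Rightarrow> 'v) \<Rightarrow> ('v \<Rightarrow> 'v) \<Rightarrow> complex \<Rightarrow> 'v set" where
  "wspace s H \<mu> = {v. H v = s \<mu> v}"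

definition supp :: "(complex \<Rightarrow> 'v::ab_group_add \<Rightarrow> 'v) \<Rightarrow> ('v \<Rightarrow> 'v) \<Rightarrow> complex set" where
  "supp s H = {\<mu>. wspace s H \<mu> \<noteq> {0}}"

definition weight_mod :: "(complex \<Rightarrow> 'v::ab_group_add \<Rightarrow> 'v) \<Rightarrow> ('v \<Rightarrow> 'v) \<Rightarrow> bool" where
  "weight_mod s H \<longleftrightarrow> (\<forall>v. v \<in> module.span s (\<Union>\<mu>. wspace s H \<mu>))"

definition highest_mod :: "nat \<Rightarrow> (complex \<Rightarrow> 'v::ab_group_add \<Rightarrow> 'v) \<Rightarrow> ('v \<Rightarrow> 'v) \<Rightarrow> ('v \<Rightarrow> 'v)
    \<Rightarrow> ('v \<Rightarrow> 'v) \<Rightarrow> (nat \<Rightarrow> 'v \<Rightarrow> 'v) \<Rightarrow> bool" where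
  "highest_mod n s E H F P \<longleftrightarrow> (\<exists>v \<mu>. v \<noteq> 0 \<and> H v = s \<mu> v \<and> E v = 0 \<and>
     (\<forall>k\<le>n. 2 * k < n \<longrightarrow> P k v = 0) \<and>
     (even n \<longrightarrow> (\<exists>c. P (n div 2) v = s c v)) \<and>
     generated_by n s E H F P v)"

definition lowest_mod :: "nat \<Rightarrow> (complex \<Rightarrow> 'v::ab_group_add \<Rightarrow> 'v) \<Rightarrow> ('v \<Rightarrow> 'v) \<Rightarrow> ('v \<Rightarrow> 'v)
    \<Rightarrow> ('v \<Rightarrow> 'v) \<Rightarrow> (nat \<Rightarrow> 'v \<Rightarrow> 'v) \<Rightarrow> bool" where
  "lowest_mod n s E H F P \<longleftrightarrow> (\<exists>v \<mu>. v \<noteq> 0 \<and> H v = s \<mu> v \<and> F v = 0 \<and>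
     (\<forall>k\<le>n. n < 2 * k \<longrightarrow> P k v = 0) \<and>
     (even n \<longrightarrow> (\<exists>c. P (n div 2) v = s c v)) \<and>
     generated_by n s E H F P v)"

definition fin_dim :: "(complex \<Rightarrow> 'v::ab_group_add \<Rightarrow> 'v) \<Rightarrow> 'v set \<Rightarrow> bool" where
  "fin_dim s S \<longleftrightarrow> (\<exists>B. finite B \<and> S \<subseteq> module.span s B)"

end

theory Submission
  imports Defs "HOL-Computational_Algebra.Fundamental_Theorem_Algebra"
begin

text \<open>
  Every generator raises the nilpotency index of a vector under e by a bounded amount, so the
  vectors killed by some power of e form a submodule; by simplicity it is 0 or V. If it is V,
  take e-primitive vectors w_a of weight \<lambda> + 2a: the vectors f^a w_a lie in the
  finite-dimensional V_\<lambda> and are linearly independent once \<lambda> + 2a avoids 0, ..., a - 1.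
  Hence the weights are bounded above and a vector of maximal weight is a highest weight vector;
  for l \<in> \<nat> it can be chosen as an eigenvector of p_l, because the generalized eigenspaces of
  p_l are submodules too. So e is injective unless V is a highest weight module, and the
  statement for f follows by the Chevalley involution e \<leftrightarrow> f, h \<mapsto> -h, p_k \<mapsto> p_(2l-k).

  If e and f are injective they embed every V_(\<lambda>+2i) into its neighbours, so these spaces are
  finite-dimensional of equal dimension and e, f are bijective. For l \<in> \<nat> the weights
  \<lambda> + 2\<int> + 1 do not occur, since their span would be a proper submodule. For l \<notin> \<nat>, p_0 is
  injective: otherwise it is nilpotent (it commutes with e, and finite-dimensionality makes it
  uniformly so), the relation [p_k, f] = -(2l - k) p_(k+1) propagates nilpotency to every p_k,
  and a common kernel vector of the p_k would span a proper submodule. Finally p_0 and p_(2l)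
  embed V_\<mu> into V_(\<mu>+2l) and V_(\<mu>-2l), which compares the two parity classes.
\<close>

section \<open>Linear algebra\<close>

definition gen_kernel :: "('a::zero \<Rightarrow> 'a) \<Rightarrow> 'a set" where
  "gen_kernel T = {v. \<exists>N. (T ^^ N) v = 0}"

definition shifts_nilpotency :: "('a::zero \<Rightarrow> 'a) \<Rightarrow> nat \<Rightarrow> ('a \<Rightarrow> 'a) \<Rightarrow> bool" where
  "shifts_nilpotency T d X \<longleftrightarrow> (\<forall>M v. (T ^^ M) v = 0 \<longrightarrow> (T ^^ (M + d)) (X v) = 0)"

lemma gen_kernel_invariant:
  assumes "shifts_nilpotency T d X" and "v \<in> gen_kernel T"
  shows "X v \<in> gen_kernel T"
  using assms unfolding shifts_nilpotency_def gen_kernel_def by blast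

lemma last_nonzero_iterate:
  assumes "v \<noteq> 0" and "(T ^^ N) v = 0"
  obtains j where "(T ^^ j) v \<noteq> 0" and "T ((T ^^ j) v) = 0"
  using assms
proof (induction N)
  case (Suc N)
  then show ?case by (cases "(T ^^ N) v = 0") auto
qed simp

definition poly_apply :: "('a::zero \<Rightarrow> 'b::monoid_add \<Rightarrow> 'b) \<Rightarrow> ('b \<Rightarrow> 'b) \<Rightarrow> 'a poly \<Rightarrow> 'b \<Rightarrow> 'b" where
  "poly_apply sc T q = fold_coeffs (\<lambda>a g v. sc a v + T (g v)) q (\<lambda>v. 0)"

context vector_space
begin

interpretation vector_space_pair scale scale ..

lemma linear_funpow:
  assumes "Vector_Spaces.linear scale scale T"
  shows "Vector_Spaces.linear scale scale (T ^^ k)"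
proof (induction k)
  case 0
  show ?case using linear_id by (simp add: id_def)
next
  case (Suc k)
  show ?case unfolding funpow.simps(2) by (rule Vector_Spaces.linear_compose[OF Suc assms])
qed

lemma funpow_zero_mono:
  assumes T: "Vector_Spaces.linear scale scale T" and "(T ^^ N) v = 0" and "N \<le> M"
  shows "(T ^^ M) v = 0"
proof -
  have "(T ^^ M) v = (T ^^ (M - N)) ((T ^^ N) v)"
    using \<open>N \<le> M\<close> by (metis comp_apply funpow_add le_add_diff_inverse2)
  then show ?thesis using assms(2) linear_0[OF linear_funpow[OF T]] by simp
qed

lemma subspace_gen_kernel:
  assumes T: "Vector_Spaces.linear scale scale T"
  shows "subspace (gen_kernel T)"
  unfolding subspace_def gen_kernel_def
proof (intro conjI ballI allI; clarsimp)
  show "\<exists>N. (T ^^ N) 0 = 0" using linear_0[OF linear_funpow[OF T]] by blast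
next
  fix x y N M assume "(T ^^ N) x = 0" "(T ^^ M) y = 0"
  then have "(T ^^ (N + M)) x = 0" "(T ^^ (N + M)) y = 0"
    using funpow_zero_mono[OF T] by auto
  then show "\<exists>K. (T ^^ K) (x + y) = 0"
    by (intro exI[of _ "N + M"]) (simp add: linear_add[OF linear_funpow[OF T]])
next
  fix c x N assume "(T ^^ N) x = 0"
  then show "\<exists>K. (T ^^ K) (scale c x) = 0" using linear_scale[OF linear_funpow[OF T]] by auto
qed

lemma funpow_commute:
  assumes "\<And>v. T (X v) = X (T v)"
  shows "(T ^^ k) (X v) = X ((T ^^ k) v)"
  by (induction k) (simp_all add: assms)

lemma funpow_commutator:
  assumes T: "Vector_Spaces.linear scale scale T"
    and XY: "\<And>v. T (X v) = X (T v) + Y v" and TY: "\<And>v. T (Y v) = Y (T v)"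
  shows "(T ^^ Suc r) (X v) = X ((T ^^ Suc r) v) + scale (of_nat (Suc r)) (Y ((T ^^ r) v))"
proof (induction r arbitrary: v)
  case (Suc r)
  have "(T ^^ Suc (Suc r)) (X v) = (T ^^ Suc r) (X (T v) + Y v)"
    by (simp only: funpow_Suc_right[of "Suc r"] comp_apply XY)
  also have "\<dots> = (T ^^ Suc r) (X (T v)) + (T ^^ Suc r) (Y v)"
    by (rule linear_add[OF linear_funpow[OF T]])
  also have "(T ^^ Suc r) (X (T v))
      = X ((T ^^ Suc (Suc r)) v) + scale (of_nat (Suc r)) (Y ((T ^^ Suc r) v))"
    using Suc.IH[of "T v"] by (simp only: funpow_Suc_right comp_apply)
  also have "(T ^^ Suc r) (Y v) = Y ((T ^^ Suc r) v)"
    by (rule funpow_commute[of T Y, OF TY])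
  finally show ?case
    by (simp only: of_nat_Suc[of "Suc r"] scale_left_distrib scale_one ac_simps)
qed (simp add: XY)

lemma shifts_nilpotency_commutator:
  assumes T: "Vector_Spaces.linear scale scale T" and X0: "X 0 = 0"
    and XY: "\<And>v. T (X v) = X (T v) + Y v" and Y: "shifts_nilpotency T d Y"
  shows "shifts_nilpotency T (Suc d) X"
  unfolding shifts_nilpotency_def
proof (intro allI impI)
  fix M v assume "(T ^^ M) v = 0"
  then show "(T ^^ (M + Suc d)) (X v) = 0"
  proof (induction M arbitrary: v)
    case 0
    then show ?case using linear_0[OF linear_funpow[OF T]] by (simp add: X0 del: funpow.simps)
  next
    case (Suc M)
    have "(T ^^ (Suc M + Suc d)) (X v) = (T ^^ (M + Suc d)) (X (T v) + Y v)"
      by (simp only: add_Suc funpow_Suc_right[of "M + Suc d"] comp_apply XY)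
    also have "\<dots> = (T ^^ (M + Suc d)) (X (T v)) + (T ^^ (Suc M + d)) (Y v)"
      by (simp only: linear_add[OF linear_funpow[OF T]] add_Suc add_Suc_right)
    moreover have "(T ^^ (M + Suc d)) (X (T v)) = 0"
      using Suc by (simp only: funpow_Suc_right comp_apply)
    moreover have "(T ^^ (Suc M + d)) (Y v) = 0"
      using Y Suc.prems unfolding shifts_nilpotency_def by blast
    ultimately show ?case by simp
  qed
qed

lemma shifts_nilpotency_commuting:
  assumes "Vector_Spaces.linear scale scale Y" and "\<And>v. T (Y v) = Y (T v)"
  shows "shifts_nilpotency T 0 Y"
  unfolding shifts_nilpotency_def
  using funpow_commute[of T Y, OF assms(2)] linear_0[OF assms(1)] by simp

lemma shifts_nilpotency_scale:
  assumes T: "Vector_Spaces.linear scale scale T" and "shifts_nilpotency T d X"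
  shows "shifts_nilpotency T d (\<lambda>v. scale c (X v))"
  using assms(2) linear_scale[OF linear_funpow[OF T]] unfolding shifts_nilpotency_def by simp

lemma linear_span_invariant:
  assumes T: "Vector_Spaces.linear scale scale T" and "\<And>x. x \<in> S \<Longrightarrow> T x \<in> span S"
    and "x \<in> span S"
  shows "T x \<in> span S"
proof -
  have "T ` span S = span (T ` S)" by (rule linear_span_image[OF T, symmetric])
  also have "\<dots> \<subseteq> span S" using assms(2) by (intro span_minimal) auto
  finally show ?thesis using assms(3) by blast
qed

lemma triangular_independent:
  fixes A :: "nat set"
  assumes "finite A" and \<phi>: "\<And>a. a \<in> A \<Longrightarrow> Vector_Spaces.linear scale scale (\<phi> a)"
    and below: "\<And>a b. a \<in> A \<Longrightarrow> b \<in> A \<Longrightarrow> b < a \<Longrightarrow> \<phi> a (u b) = 0"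
    and diag: "\<And>a. a \<in> A \<Longrightarrow> \<phi> a (u a) \<noteq> 0"
  shows "independent (u ` A)" and "card (u ` A) = card A"
proof -
  have "independent (u ` A) \<and> card (u ` A) = card A"
    using assms
  proof (induction A rule: finite_ranking_induct[where f = "\<lambda>x. x"])
    case (insert x S)
    have IH: "independent (u ` S)" "card (u ` S) = card S"
      using insert.IH insert.prems by auto
    show ?case
    proof (cases "x \<in> S")
      case True
      then show ?thesis using IH by (simp add: insert_absorb)
    next
      case False
      have lt: "b < x" if "b \<in> S" for b
        using insert.hyps(2)[OF that] False that by (auto simp: order.order_iff_strict)
      have "\<phi> x z = 0" if "z \<in> span (u ` S)" for z
        using linear_eq_0_on_span[OF insert.prems(1)[of x] _ that] insert.prems(2) lt by auto
      then have ux: "u x \<notin> span (u ` S)" using insert.prems(3) by blast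
      then have "u x \<notin> u ` S" using span_base by blast
      with ux IH insert.hyps(1) False show ?thesis by (simp add: independent_insert)
    qed
  qed (simp add: independent_empty)
  then show "independent (u ` A)" "card (u ` A) = card A" by auto
qed

lemma common_kernel_vector:
  fixes m :: nat and v :: 'b
  assumes lin: "\<And>k. k < m \<Longrightarrow> Vector_Spaces.linear scale scale (T k)"
    and comm: "\<And>i k v. i < m \<Longrightarrow> k < m \<Longrightarrow> T i (T k v) = T k (T i v)"
    and nil: "\<And>k v. k < m \<Longrightarrow> v \<in> gen_kernel (T k)"
    and "v \<noteq> 0"
  obtains u where "u \<noteq> 0" and "\<And>k. k < m \<Longrightarrow> T k u = 0"
proof -
  have "\<exists>u. u \<noteq> 0 \<and> (\<forall>i<k. T i u = 0)" if "k \<le> m" for k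
    using that
  proof (induction k)
    case 0
    show ?case using \<open>v \<noteq> 0\<close> by (intro exI[of _ v]) simp
  next
    case (Suc k)
    then have km: "k < m" by simp
    obtain u where u: "u \<noteq> 0" "\<forall>i<k. T i u = 0" using Suc.IH km by auto
    obtain N where "(T k ^^ N) u = 0" using nil[OF km, of u] unfolding gen_kernel_def by blast
    then obtain j where j: "(T k ^^ j) u \<noteq> 0" "T k ((T k ^^ j) u) = 0"
      using last_nonzero_iterate[OF u(1)] by blast
    have "T i ((T k ^^ j) u) = 0" if "i < k" for i
    proof -
      have "\<And>v. T k (T i v) = T i (T k v)" by (rule comm[OF km less_trans[OF that km]])
      then have "(T k ^^ j) (T i u) = T i ((T k ^^ j) u)" by (rule funpow_commute)
      then show ?thesis using u(2) that linear_0[OF linear_funpow[OF lin[OF km]]] by simp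
    qed
    with j show ?case using less_Suc_eq by blast
  qed
  then obtain u where "u \<noteq> 0" "\<forall>i<m. T i u = 0" by blast
  with that show ?thesis by blast
qed

lemma eigenvectors_sum_eq_0:
  assumes H: "Vector_Spaces.linear scale scale H" and "finite M"
    and "\<And>\<mu>. \<mu> \<in> M \<Longrightarrow> H (g \<mu>) = scale \<mu> (g \<mu>)" and "sum g M = 0"
  shows "\<forall>\<mu>\<in>M. g \<mu> = 0"
  using assms(2-)
proof (induction M arbitrary: g rule: finite_induct)
  case (insert x M)
  define h where "h \<mu> = scale (\<mu> - x) (g \<mu>)" for \<mu>
  have "H (g \<mu>) - scale x (g \<mu>) = h \<mu>" if "\<mu> \<in> insert x M" for \<mu>
    using insert.prems(1)[OF that] by (simp add: h_def scale_left_diff_distrib)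
  then have "sum h (insert x M) = (\<Sum>\<mu>\<in>insert x M. H (g \<mu>) - scale x (g \<mu>))"
    by (intro sum.cong) auto
  also have "\<dots> = H (sum g (insert x M)) - scale x (sum g (insert x M))"
    by (simp only: sum_subtractf linear_sum[OF H] scale_sum_right)
  finally have "sum h (insert x M) = H (sum g (insert x M)) - scale x (sum g (insert x M))" .
  then have "sum h M = 0" using insert.prems(2) insert.hyps by (simp add: h_def linear_0[OF H])
  moreover have "H (h \<mu>) = scale \<mu> (h \<mu>)" if "\<mu> \<in> M" for \<mu>
    using insert.prems(1) that by (simp add: h_def linear_scale[OF H] scale_left_commute)
  ultimately have "\<forall>\<mu>\<in>M. h \<mu> = 0" using insert.IH by blast
  then have "\<forall>\<mu>\<in>M. g \<mu> = 0" using insert.hyps(2) by (auto simp: h_def)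
  with insert.prems(2) insert.hyps show ?case by simp
qed simp

lemma span_eigenspaces_obtain_sum:
  assumes H: "Vector_Spaces.linear scale scale H"
    and "x \<in> span (\<Union>\<mu>\<in>A. {v. H v = scale \<mu> v})"
  obtains M g where "finite M" "M \<subseteq> A" "\<And>\<mu>. \<mu> \<in> M \<Longrightarrow> H (g \<mu>) = scale \<mu> (g \<mu>)"
    "x = sum g M"
proof -
  define D where "D = {x. \<exists>M g. finite M \<and> M \<subseteq> A \<and> (\<forall>\<mu>\<in>M. H (g \<mu>) = scale \<mu> (g \<mu>)) \<and> x = sum g M}"
  have eigen_add: "H (a + b) = scale \<mu> (a + b)" if "H a = scale \<mu> a" "H b = scale \<mu> b" for a b \<mu>
    using that by (simp add: linear_add[OF H] scale_right_distrib)
  have "subspace D" unfolding subspace_def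
  proof (intro conjI ballI allI)
    show "0 \<in> D" unfolding D_def by (intro CollectI exI[of _ "{}"]) simp
  next
    fix y z assume "y \<in> D" "z \<in> D"
    then obtain M1 g1 M2 g2 where 1: "finite M1" "M1 \<subseteq> A" "\<forall>\<mu>\<in>M1. H (g1 \<mu>) = scale \<mu> (g1 \<mu>)" "y = sum g1 M1"
      and 2: "finite M2" "M2 \<subseteq> A" "\<forall>\<mu>\<in>M2. H (g2 \<mu>) = scale \<mu> (g2 \<mu>)" "z = sum g2 M2"
      unfolding D_def by blast
    define g where "g \<mu> = (if \<mu> \<in> M1 then g1 \<mu> else 0) + (if \<mu> \<in> M2 then g2 \<mu> else 0)" for \<mu>
    have "sum (\<lambda>\<mu>. if \<mu> \<in> M1 then g1 \<mu> else 0) (M1 \<union> M2) = sum g1 M1"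
      by (rule sum.mono_neutral_cong_right) (use 1 2 in auto)
    moreover have "sum (\<lambda>\<mu>. if \<mu> \<in> M2 then g2 \<mu> else 0) (M1 \<union> M2) = sum g2 M2"
      by (rule sum.mono_neutral_cong_right) (use 1 2 in auto)
    ultimately have "sum g (M1 \<union> M2) = sum g1 M1 + sum g2 M2"
      unfolding g_def sum.distrib by simp
    moreover have "H (g \<mu>) = scale \<mu> (g \<mu>)" if "\<mu> \<in> M1 \<union> M2" for \<mu>
      using 1(3) 2(3) eigen_add linear_0[OF H] unfolding g_def by auto
    ultimately show "y + z \<in> D" unfolding D_def using 1 2
      by (intro CollectI exI[of _ "M1 \<union> M2"] exI[of _ g]) auto
  next
    fix c y assume "y \<in> D"
    then obtain M g where "finite M" "M \<subseteq> A" "\<forall>\<mu>\<in>M. H (g \<mu>) = scale \<mu> (g \<mu>)" "y = sum g M"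
      unfolding D_def by blast
    then show "scale c y \<in> D" unfolding D_def
      by (intro CollectI exI[of _ M] exI[of _ "\<lambda>\<mu>. scale c (g \<mu>)"])
        (auto simp: scale_sum_right linear_scale[OF H] scale_left_commute)
  qed
  moreover have "(\<Union>\<mu>\<in>A. {v. H v = scale \<mu> v}) \<subseteq> D"
  proof
    fix y assume "y \<in> (\<Union>\<mu>\<in>A. {v. H v = scale \<mu> v})"
    then obtain \<mu> where "\<mu> \<in> A" "H y = scale \<mu> y" by blast
    then show "y \<in> D" unfolding D_def by (intro CollectI exI[of _ "{\<mu>}"] exI[of _ "\<lambda>_. y"]) simp
  qed
  ultimately have "x \<in> D" using assms(2) span_minimal by blast
  with that show ?thesis unfolding D_def by blast
qed

lemma eigenvector_in_span_of_other_eigenspaces: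
  assumes H: "Vector_Spaces.linear scale scale H" and w: "H w = scale \<nu> w"
    and sp: "w \<in> span (\<Union>\<mu>\<in>A. {v. H v = scale \<mu> v})" and "\<nu> \<notin> A"
  shows "w = 0"
proof -
  obtain M g where M: "finite M" "M \<subseteq> A" "\<And>\<mu>. \<mu> \<in> M \<Longrightarrow> H (g \<mu>) = scale \<mu> (g \<mu>)"
      "w = sum g M"
    using span_eigenspaces_obtain_sum[OF H sp] by blast
  have \<nu>M: "\<nu> \<notin> M" using M(2) \<open>\<nu> \<notin> A\<close> by blast
  define g' where "g' = g(\<nu> := - w)"
  have "sum g' M = sum g M" by (rule sum.cong) (use \<nu>M in \<open>auto simp: g'_def\<close>)
  then have "sum g' (insert \<nu> M) = 0"
    using M(1,4) \<nu>M by (simp add: g'_def)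
  moreover have "H (g' \<mu>) = scale \<mu> (g' \<mu>)" if "\<mu> \<in> insert \<nu> M" for \<mu>
    using M(3) w that \<nu>M by (auto simp: g'_def linear_neg[OF H])
  ultimately have "\<forall>\<mu>\<in>insert \<nu> M. g' \<mu> = 0"
    using eigenvectors_sum_eq_0[OF H] M(1) by blast
  then show ?thesis by (simp add: g'_def)
qed

lemma sequence_element_in_span_of_predecessors:
  fixes g :: "nat \<Rightarrow> 'b"
  assumes B: "finite B" and gB: "\<And>i. g i \<in> span B"
  obtains k where "g k \<in> span (g ` {..<k})"
proof -
  have "\<exists>k\<le>card B. g k \<in> span (g ` {..<k})"
  proof (rule ccontr)
    assume nk: "\<not> (\<exists>k\<le>card B. g k \<in> span (g ` {..<k}))"
    have "independent (g ` {..<k}) \<and> card (g ` {..<k}) = k" if "k \<le> Suc (card B)" for k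
      using that
    proof (induction k)
      case (Suc k)
      then have IH: "independent (g ` {..<k})" "card (g ` {..<k}) = k" by auto
      have "k \<le> card B" using Suc.prems by simp
      have gk: "g k \<notin> span (g ` {..<k})"
      proof
        assume "g k \<in> span (g ` {..<k})"
        with \<open>k \<le> card B\<close> have "\<exists>k\<le>card B. g k \<in> span (g ` {..<k})"
          by (intro exI[of _ k]) simp
        with nk show False by contradiction
      qed
      then have "g k \<notin> g ` {..<k}" by (meson span_base)
      moreover have "g ` {..<Suc k} = insert (g k) (g ` {..<k})" by (simp add: lessThan_Suc)
      ultimately show ?case using IH gk by (simp add: independent_insert)
    qed (simp add: independent_empty)
    from this[of "Suc (card B)"]
    have ind: "independent (g ` {..<Suc (card B)})"
      and card_eq: "card (g ` {..<Suc (card B)}) = Suc (card B)" by auto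
    have "g ` {..<Suc (card B)} \<subseteq> span B" using gB by auto
    then have "card (g ` {..<Suc (card B)}) \<le> card B"
      using independent_span_bound[OF B ind] by simp
    then show False using card_eq by simp
  qed
  then show ?thesis using that by auto
qed

lemma poly_apply_0 [simp]: "poly_apply scale T 0 v = 0"
  by (simp add: poly_apply_def)

lemma poly_apply_pCons:
  assumes T: "Vector_Spaces.linear scale scale T"
  shows "poly_apply scale T (pCons a q) v = scale a v + T (poly_apply scale T q v)"
proof (cases "a = 0 \<and> q = 0")
  case True
  then show ?thesis by (simp add: linear_0[OF T])
next
  case False
  then have "fold_coeffs f (pCons a q) = f a \<circ> fold_coeffs f q" for f :: "'a \<Rightarrow> ('b \<Rightarrow> 'b) \<Rightarrow> 'b \<Rightarrow> 'b"
    by (cases "a = 0") simp_all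
  then show ?thesis unfolding poly_apply_def by simp
qed

lemma poly_apply_add:
  assumes T: "Vector_Spaces.linear scale scale T"
  shows "poly_apply scale T (p + q) v = poly_apply scale T p v + poly_apply scale T q v"
  by (induction p q rule: poly_induct2)
    (simp_all add: poly_apply_pCons[OF T] linear_add[OF T] scale_left_distrib add_ac)

lemma poly_apply_smult:
  assumes T: "Vector_Spaces.linear scale scale T"
  shows "poly_apply scale T (smult c q) v = scale c (poly_apply scale T q v)"
  by (induction q) (simp_all add: poly_apply_pCons[OF T] linear_scale[OF T] scale_right_distrib)

lemma poly_apply_minus:
  assumes T: "Vector_Spaces.linear scale scale T"
  shows "poly_apply scale T (- q) v = - poly_apply scale T q v"
  using poly_apply_smult[OF T, of "-1" q v] by simp

lemma poly_apply_mult: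
  assumes T: "Vector_Spaces.linear scale scale T"
  shows "poly_apply scale T (p * q) v = poly_apply scale T p (poly_apply scale T q v)"
  by (induction p)
    (simp_all add: poly_apply_pCons[OF T] poly_apply_add[OF T] poly_apply_smult[OF T] linear_0[OF T])

lemma poly_apply_monom:
  assumes T: "Vector_Spaces.linear scale scale T"
  shows "poly_apply scale T (monom 1 i) v = (T ^^ i) v"
  by (induction i) (simp_all add: monom_0 monom_Suc poly_apply_pCons[OF T] linear_0[OF T])

lemma span_iterates_poly_apply:
  assumes T: "Vector_Spaces.linear scale scale T" and "0 < k"
  shows "span ((\<lambda>i. (T ^^ i) w) ` {..<k}) \<subseteq> {poly_apply scale T q w | q. degree q < k}"
proof (rule span_minimal)
  show "(\<lambda>i. (T ^^ i) w) ` {..<k} \<subseteq> {poly_apply scale T q w |q. degree q < k}"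
    by (force simp: poly_apply_monom[OF T] degree_monom_eq intro: exI[of _ "monom 1 _"])
  show "subspace {poly_apply scale T q w |q. degree q < k}"
    unfolding subspace_def
  proof (intro conjI ballI allI)
    show "0 \<in> {poly_apply scale T q w |q. degree q < k}" using assms by (intro CollectI exI[of _ 0]) simp
  next
    fix x y assume "x \<in> {poly_apply scale T q w |q. degree q < k}" "y \<in> {poly_apply scale T q w |q. degree q < k}"
    then obtain p q where "x = poly_apply scale T p w" "y = poly_apply scale T q w" "degree p < k" "degree q < k"
      by auto
    moreover from this have "degree (p + q) < k"
      by (meson degree_add_le_max le_less_trans max_less_iff_conj)
    ultimately show "x + y \<in> {poly_apply scale T q w |q. degree q < k}"
      by (intro CollectI exI[of _ "p + q"]) (simp add: poly_apply_add[OF T])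
  next
    fix c x assume "x \<in> {poly_apply scale T q w |q. degree q < k}"
    then obtain q where "x = poly_apply scale T q w" "degree q < k" by auto
    moreover from this have "degree (smult c q) < k" using degree_smult_le le_less_trans by blast
    ultimately show "scale c x \<in> {poly_apply scale T q w |q. degree q < k}"
      by (intro CollectI exI[of _ "smult c q"]) (simp add: poly_apply_smult[OF T])
  qed
qed

end

locale cvector_space = vector_space s for s :: "complex \<Rightarrow> 'v::ab_group_add \<Rightarrow> 'v"
begin

interpretation vector_space_pair s s ..

lemma fin_dim_obtain_basis:
  assumes "fin_dim s X"
  obtains B where "finite B" "B \<subseteq> X" "independent B" "X \<subseteq> span B" "card B = dim X"
proof -
  obtain B where B: "B \<subseteq> X" "independent B" "X \<subseteq> span B" "card B = dim X"
    by (rule basis_exists)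
  obtain C where "finite C" "X \<subseteq> span C" using assms unfolding fin_dim_def by blast
  then have "finite B" using independent_span_bound[OF _ B(2)] B(1) by blast
  with B that show ?thesis by blast
qed

lemma independent_card_le_dim:
  assumes "fin_dim s Y" and "independent S" and "S \<subseteq> Y"
  shows "finite S" and "card S \<le> dim Y"
proof -
  obtain B where "finite B" "Y \<subseteq> span B" "card B = dim Y"
    using assms(1) by (rule fin_dim_obtain_basis)
  then show "finite S" "card S \<le> dim Y"
    using independent_span_bound[of B S] assms(2,3) by auto
qed

lemma linear_inj_dim_le:
  assumes T: "Vector_Spaces.linear s s T" "inj T"
    and TXY: "\<And>x. x \<in> X \<Longrightarrow> T x \<in> Y" and fY: "fin_dim s Y"
  shows "fin_dim s X" and "dim X \<le> dim Y"
proof -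
  obtain B where B: "B \<subseteq> X" "independent B" "X \<subseteq> span B" "card B = dim X"
    by (rule basis_exists)
  have iT: "independent (T ` B)"
    using linear_independent_injective_image[OF T(1) B(2)] T(2) inj_on_subset by blast
  have "T ` B \<subseteq> Y" using B(1) TXY by blast
  then have fin: "finite (T ` B)" and le: "card (T ` B) \<le> dim Y"
    using independent_card_le_dim[OF fY iT] by auto
  have "finite B" using fin T(2) finite_imageD inj_on_subset by blast
  then show "fin_dim s X" unfolding fin_dim_def using B(3) by blast
  show "dim X \<le> dim Y" using le B(4) card_image[OF inj_on_subset[OF T(2)]] by simp
qed

lemma linear_inj_image_eq:
  assumes X: "subspace X" and T: "Vector_Spaces.linear s s T" "inj T"
    and TXY: "\<And>x. x \<in> X \<Longrightarrow> T x \<in> Y"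
    and U: "Vector_Spaces.linear s s U" "inj U" and UYX: "\<And>y. y \<in> Y \<Longrightarrow> U y \<in> X"
    and fY: "fin_dim s Y"
  shows "T ` X = Y"
proof
  show "T ` X \<subseteq> Y" using TXY by blast
  have fX: "fin_dim s X" using linear_inj_dim_le(1)[OF T TXY fY] .
  have "dim X \<le> dim Y" by (rule linear_inj_dim_le(2)[OF T TXY fY])
  moreover have "dim Y \<le> dim X" by (rule linear_inj_dim_le(2)[OF U UYX fX])
  ultimately have dim_eq: "dim X = dim Y" by simp
  obtain B where B: "finite B" "B \<subseteq> X" "independent B" "X \<subseteq> span B" "card B = dim X"
    using fX by (rule fin_dim_obtain_basis)
  have iT: "independent (T ` B)"
    using linear_independent_injective_image[OF T(1) B(3)] T(2) inj_on_subset by blast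
  have TBY: "T ` B \<subseteq> Y" using B(2) TXY by blast
  have card_TB: "card (T ` B) = dim Y"
    using B(5) dim_eq card_image[OF inj_on_subset[OF T(2)]] by simp
  have "Y \<subseteq> span (T ` B)"
  proof
    fix y assume y: "y \<in> Y"
    show "y \<in> span (T ` B)"
    proof (rule ccontr)
      assume ny: "y \<notin> span (T ` B)"
      then have "independent (insert y (T ` B))" "insert y (T ` B) \<subseteq> Y"
        using iT TBY y by (auto simp: independent_insert)
      then have "card (insert y (T ` B)) \<le> dim Y" by (rule independent_card_le_dim(2)[OF fY])
      moreover have "finite (T ` B)" "y \<notin> T ` B" using B(1) ny span_base by auto
      ultimately show False using card_TB by simp
    qed
  qed
  also have "span (T ` B) = T ` span B" by (rule linear_span_image[OF T(1)])
  also have "\<dots> \<subseteq> T ` X" using span_minimal[OF B(2) X] by blast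
  finally show "Y \<subseteq> T ` X" .
qed

lemma linear_inj_dim_image:
  assumes T: "Vector_Spaces.linear s s T" "inj T"
  shows "dim (T ` X) = dim X"
proof -
  obtain B where B: "B \<subseteq> X" "independent B" "X \<subseteq> span B" "card B = dim X"
    by (rule basis_exists)
  have iT: "independent (T ` B)"
    using linear_independent_injective_image[OF T(1) B(2)] T(2) inj_on_subset by blast
  have "T ` X \<subseteq> span (T ` B)"
    using B(3) linear_span_image[OF T(1), of B] by blast
  then have "dim (T ` X) = card (T ` B)"
    using B(1) iT by (intro dim_unique[of "T ` B"]) auto
  also have "\<dots> = dim X" using B(4) card_image[OF inj_on_subset[OF T(2)]] by simp
  finally show ?thesis .
qed

lemma uniformly_nilpotent_on_fin_dim:
  assumes T: "Vector_Spaces.linear s s T"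
    and fX: "fin_dim s X" and nil: "X \<subseteq> gen_kernel T"
  obtains N where "\<And>v. v \<in> X \<Longrightarrow> (T ^^ N) v = 0"
proof -
  obtain B where B: "finite B" "B \<subseteq> X" "X \<subseteq> span B"
    using fX by (rule fin_dim_obtain_basis)
  have "\<forall>b\<in>B. \<exists>N. (T ^^ N) b = 0" using B(2) nil unfolding gen_kernel_def by blast
  then obtain K where K: "\<And>b. b \<in> B \<Longrightarrow> (T ^^ K b) b = 0" by metis
  define N where "N = Max (K ` B)"
  have "(T ^^ N) b = 0" if "b \<in> B" for b
    using funpow_zero_mono[OF T K[OF that]] B(1) that by (simp add: N_def)
  then have "(T ^^ N) v = 0" if "v \<in> X" for v
    using linear_eq_0_on_span[OF linear_funpow[OF T]] B(3) that by blast
  then show ?thesis by (rule that)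
qed

lemma eigenvector_of_annihilating_poly:
  assumes T: "Vector_Spaces.linear s s T" and "q \<noteq> 0" and "poly_apply s T q w = 0" and "w \<noteq> 0"
  obtains u c where "u \<noteq> 0" and "T u = s c u"
  using assms(2-)
proof (induction "degree q" arbitrary: q thesis rule: less_induct)
  case less
  show ?case
  proof (cases "degree q = 0")
    case True
    then obtain a where "q = pCons a 0" by (rule degree_eq_zeroE)
    with less.prems show ?thesis by (auto simp: poly_apply_pCons[OF T] linear_0[OF T])
  next
    case False
    then have "\<not> constant (poly q)" by (simp add: constant_degree)
    then obtain r where "poly q r = 0" using fundamental_theorem_of_algebra by blast
    then obtain q' where q': "q = [:-r, 1:] * q'" using poly_eq_0_iff_dvd by blast
    have "q' \<noteq> 0" using less.prems(2) q' by auto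
    then have "degree q = Suc (degree q')" unfolding q' by (subst degree_mult_eq) auto
    then have deg: "degree q' < degree q" by simp
    define u where "u = poly_apply s T q' w"
    have "T u - s r u = poly_apply s T q w"
      unfolding q' u_def poly_apply_mult[OF T] by (simp add: poly_apply_pCons[OF T] linear_0[OF T])
    then have "T u = s r u" using less.prems(3) by simp
    show ?thesis
    proof (cases "u = 0")
      case False
      with \<open>T u = s r u\<close> show ?thesis using less.prems(1) by blast
    next
      case True
      then show ?thesis
        using less.hyps[OF deg less.prems(1) \<open>q' \<noteq> 0\<close> _ less.prems(4)] by (simp add: u_def)
    qed
  qed
qed

lemma eigenvector_exists:
  assumes T: "Vector_Spaces.linear s s T" and X: "subspace X" and TX: "\<And>x. x \<in> X \<Longrightarrow> T x \<in> X"
    and fX: "fin_dim s X" and "X \<noteq> {0}"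
  obtains u c where "u \<noteq> 0" and "T u = s c u"
proof -
  obtain B where B: "finite B" "X \<subseteq> span B" using fX unfolding fin_dim_def by blast
  obtain w where w: "w \<in> X" "w \<noteq> 0" using \<open>X \<noteq> {0}\<close> subspace_0[OF X] by blast
  define g where "g i = (T ^^ i) w" for i
  have gX: "g i \<in> X" for i unfolding g_def by (induction i) (simp_all add: w TX)
  have "g i \<in> span B" for i by (rule subsetD[OF B(2) gX])
  then obtain k where k: "g k \<in> span (g ` {..<k})"
    by (rule sequence_element_in_span_of_predecessors[OF B(1)])
  have "0 < k"
  proof (rule ccontr)
    assume "\<not> 0 < k"
    then have "w \<in> span {}" using k by (simp add: g_def)
    then show False using w(2) by simp
  qed
  then obtain q where q: "g k = poly_apply s T q w" "degree q < k"
    using subsetD[OF span_iterates_poly_apply[OF T \<open>0 < k\<close>, of w]] k unfolding g_def by auto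
  define r where "r = monom 1 k + (- q)"
  have "coeff r k = 1" using q(2) by (simp add: r_def coeff_eq_0)
  then have "r \<noteq> 0" by auto
  have "poly_apply s T r w = poly_apply s T (monom 1 k) w + poly_apply s T (- q) w"
    unfolding r_def by (rule poly_apply_add[OF T])
  also have "\<dots> = 0"
    using q(1) by (simp add: poly_apply_minus[OF T] poly_apply_monom[OF T] g_def)
  finally have "poly_apply s T r w = 0" .
  with \<open>r \<noteq> 0\<close>
  show ?thesis by (rule eigenvector_of_annihilating_poly[OF T _ _ w(2) that])
qed

end

section \<open>sl2-modules\<close>

locale sl2_module = cvector_space s for s :: "complex \<Rightarrow> 'v::ab_group_add \<Rightarrow> 'v" +
  fixes E H F :: "'v \<Rightarrow> 'v"
  assumes linear_E: "Vector_Spaces.linear s s E"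
    and linear_H: "Vector_Spaces.linear s s H"
    and linear_F: "Vector_Spaces.linear s s F"
    and HE_comm: "H (E v) - E (H v) = s 2 (E v)"
    and HF_comm: "H (F v) - F (H v) = s (-2) (F v)"
    and EF_comm: "E (F v) - F (E v) = H v"
begin

interpretation vector_space_pair s s ..

abbreviation W :: "complex \<Rightarrow> 'v set" where "W \<mu> \<equiv> wspace s H \<mu>"

lemma HE: "H (E v) = E (H v) + s 2 (E v)"
  using HE_comm[of v] by (simp add: diff_eq_eq add.commute)

lemma HF: "H (F v) = F (H v) - s 2 (F v)"
  using HF_comm[of v] by (simp add: algebra_simps)

lemma EF: "E (F v) = F (E v) + H v"
  using EF_comm[of v] by (simp add: diff_eq_eq add.commute)

lemma mem_wspace: "v \<in> W \<mu> \<longleftrightarrow> H v = s \<mu> v"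
  by (simp add: wspace_def)

lemma subspace_wspace: "subspace (W \<mu>)"
  unfolding subspace_def
  by (auto simp: mem_wspace linear_0[OF linear_H] linear_add[OF linear_H] linear_scale[OF linear_H]
      scale_right_distrib scale_left_commute)

lemma obtain_nonzero_wspace:
  assumes "W \<mu> \<noteq> {0}"
  obtains v where "v \<in> W \<mu>" "v \<noteq> 0"
  using assms subspace_0[OF subspace_wspace] by blast

lemma E_wspace: "v \<in> W \<mu> \<Longrightarrow> E v \<in> W (\<mu> + 2)"
  by (simp add: mem_wspace HE linear_scale[OF linear_E] algebra_simps)

lemma F_wspace: "v \<in> W \<mu> \<Longrightarrow> F v \<in> W (\<mu> - 2)"
  by (simp add: mem_wspace HF linear_scale[OF linear_F] algebra_simps)

lemma H_wspace: "v \<in> W \<mu> \<Longrightarrow> H v \<in> W \<mu>"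
  using linear_scale[OF linear_H] by (simp add: mem_wspace)

lemma funpow_E_wspace: "v \<in> W \<mu> \<Longrightarrow> (E ^^ j) v \<in> W (\<mu> + 2 * of_nat j)"
proof (induction j)
  case (Suc j)
  then show ?case using E_wspace[OF Suc.IH[OF Suc.prems]] by (simp add: algebra_simps)
qed simp

lemma funpow_F_wspace: "v \<in> W \<mu> \<Longrightarrow> (F ^^ j) v \<in> W (\<mu> - 2 * of_nat j)"
proof (induction j)
  case (Suc j)
  then show ?case using F_wspace[OF Suc.IH[OF Suc.prems]] by (simp add: algebra_simps)
qed simp

lemma E_funpow_F:
  assumes "E w = 0" and w: "w \<in> W \<nu>"
  shows "E ((F ^^ Suc a) w) = s (of_nat (Suc a) * (\<nu> - of_nat a)) ((F ^^ a) w)"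
proof (induction a)
  case 0
  show ?case using assms EF[of w] by (simp add: mem_wspace linear_0[OF linear_F])
next
  case (Suc a)
  define x where "x = (F ^^ Suc a) w"
  have Hx: "H x = s (\<nu> - 2 * of_nat (Suc a)) x"
    using funpow_F_wspace[OF w, of "Suc a"] by (simp add: mem_wspace x_def)
  have "E ((F ^^ Suc (Suc a)) w) = F (E x) + H x" by (simp add: x_def EF)
  also have "F (E x) = s (of_nat (Suc a) * (\<nu> - of_nat a)) x"
    using Suc by (simp add: x_def linear_scale[OF linear_F])
  finally have "E ((F ^^ Suc (Suc a)) w)
      = s (of_nat (Suc a) * (\<nu> - of_nat a) + (\<nu> - 2 * of_nat (Suc a))) x"
    using Hx by (simp add: scale_left_distrib)
  also have "of_nat (Suc a) * (\<nu> - of_nat a) + (\<nu> - 2 * of_nat (Suc a))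
      = of_nat (Suc (Suc a)) * (\<nu> - of_nat (Suc a))"
    by (simp add: algebra_simps)
  finally show ?case by (simp add: x_def)
qed

definition raising_coeff :: "complex \<Rightarrow> nat \<Rightarrow> complex" where
  "raising_coeff \<nu> a = (\<Prod>i<a. of_nat (Suc i) * (\<nu> - of_nat i))"

lemma raising_coeff_nonzero:
  assumes "\<And>i. i < a \<Longrightarrow> \<nu> \<noteq> of_nat i"
  shows "raising_coeff \<nu> a \<noteq> 0"
  using assms by (simp add: raising_coeff_def del: of_nat_Suc)

lemma funpow_E_funpow_F:
  assumes "E w = 0" and "w \<in> W \<nu>"
  shows "(E ^^ a) ((F ^^ a) w) = s (raising_coeff \<nu> a) w"
proof (induction a)
  case (Suc a)
  have "(E ^^ Suc a) ((F ^^ Suc a) w) = (E ^^ a) (E ((F ^^ Suc a) w))"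
    by (simp only: funpow_Suc_right comp_apply)
  also have "\<dots> = s (of_nat (Suc a) * (\<nu> - of_nat a)) ((E ^^ a) ((F ^^ a) w))"
    by (simp only: E_funpow_F[OF assms] linear_scale[OF linear_funpow[OF linear_E]])
  finally show ?case
    using Suc by (simp add: raising_coeff_def mult.commute del: of_nat_Suc)
qed (simp add: raising_coeff_def)

lemma funpow_E_kills_funpow_F:
  assumes "E w = 0" and "w \<in> W \<nu>" and "a < b"
  shows "(E ^^ b) ((F ^^ a) w) = 0"
proof -
  have "(E ^^ Suc a) ((F ^^ a) w) = E (s (raising_coeff \<nu> a) w)"
    by (simp add: funpow_E_funpow_F[OF assms(1,2)])
  also have "\<dots> = 0" by (simp add: linear_scale[OF linear_E] assms(1))
  finally show ?thesis by (rule funpow_zero_mono[OF linear_E]) (use assms(3) in simp)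
qed

lemma lowered_primitive_vectors_independent:
  assumes "finite A"
    and prim: "\<And>a. a \<in> A \<Longrightarrow> w a \<noteq> 0 \<and> w a \<in> W (lam + 2 * of_nat a) \<and> E (w a) = 0"
    and nonint: "\<And>a i. a \<in> A \<Longrightarrow> i < a \<Longrightarrow> lam + 2 * of_nat a \<noteq> of_nat i"
  shows "independent ((\<lambda>a. (F ^^ a) (w a)) ` A)" and "card ((\<lambda>a. (F ^^ a) (w a)) ` A) = card A"
proof -
  define u where "u a = (F ^^ a) (w a)" for a
  have below: "(E ^^ a) (u b) = 0" if "a \<in> A" "b \<in> A" "b < a" for a b
    unfolding u_def using prim[OF that(2)] by (intro funpow_E_kills_funpow_F[OF _ _ that(3)]) auto
  have diag: "(E ^^ a) (u a) \<noteq> 0" if "a \<in> A" for a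
  proof -
    have "(E ^^ a) (u a) = s (raising_coeff (lam + 2 * of_nat a) a) (w a)"
      unfolding u_def using prim[OF that] by (simp add: funpow_E_funpow_F)
    moreover have "raising_coeff (lam + 2 * of_nat a) a \<noteq> 0"
      by (rule raising_coeff_nonzero) (rule nonint[OF that])
    ultimately show ?thesis using prim[OF that] by simp
  qed
  from triangular_independent[OF assms(1) linear_funpow[OF linear_E] below diag]
  show "independent ((\<lambda>a. (F ^^ a) (w a)) ` A)" "card ((\<lambda>a. (F ^^ a) (w a)) ` A) = card A"
    by (simp_all add: u_def[abs_def])
qed

text \<open>The weights lam + 2a with a \<ge> a0 avoid 0, ..., a - 1, so the lowered primitive vectors
  of such weights are independent in the finite-dimensional W lam.\<close>
lemma primitive_vectors_bounded:
  assumes fin: "fin_dim s (W lam)"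
  obtains M where "\<And>a w. w \<noteq> 0 \<Longrightarrow> w \<in> W (lam + 2 * of_nat a) \<Longrightarrow> E w = 0 \<Longrightarrow> a \<le> M"
proof -
  define a0 :: nat where "a0 = nat \<lceil>- Re lam\<rceil> + 1"
  have nonint: "lam + 2 * of_nat a \<noteq> of_nat i" if "a0 \<le> a" "i < a" for a i
  proof
    assume "lam + 2 * of_nat a = of_nat i"
    then have "Re (lam + 2 * of_nat a) = Re (of_nat i)" by simp
    then have "Re lam + 2 * real a = real i" by simp
    moreover have "- Re lam \<le> real (nat \<lceil>- Re lam\<rceil>)" by (rule real_nat_ceiling_ge)
    ultimately show False using that unfolding a0_def by linarith
  qed
  define primitive where "primitive a w \<longleftrightarrow> w \<noteq> 0 \<and> w \<in> W (lam + 2 * of_nat a) \<and> E w = 0" for a w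
  define K where "K = {a. a0 \<le> a \<and> (\<exists>w. primitive a w)}"
  define wf where "wf a = (SOME w. primitive a w)" for a
  have wf: "primitive a (wf a)" if "a \<in> K" for a
    using that unfolding K_def wf_def by (auto intro: someI_ex)
  have card_le: "card A \<le> dim (W lam)" if A: "finite A" "A \<subseteq> K" for A
  proof -
    have prim: "wf a \<noteq> 0 \<and> wf a \<in> W (lam + 2 * of_nat a) \<and> E (wf a) = 0" if "a \<in> A" for a
      using wf that A(2) unfolding primitive_def by blast
    have "a0 \<le> a" if "a \<in> A" for a using that A(2) unfolding K_def by blast
    note indep = lowered_primitive_vectors_independent[OF A(1) prim nonint[OF this]]
    have "(F ^^ a) (wf a) \<in> W lam" if "a \<in> A" for a
      using funpow_F_wspace[of "wf a" "lam + 2 * of_nat a" a] prim[OF that] by simp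
    then have "(\<lambda>a. (F ^^ a) (wf a)) ` A \<subseteq> W lam" by blast
    then show ?thesis using independent_card_le_dim(2)[OF fin indep(1)] indep(2) by simp
  qed
  have "finite K"
  proof (rule ccontr)
    assume "infinite K"
    then obtain A where "finite A" "card A = Suc (dim (W lam))" "A \<subseteq> K"
      using infinite_arbitrarily_large by blast
    then show False using card_le[of A] by simp
  qed
  show ?thesis
  proof (rule that)
    fix a w assume "w \<noteq> 0" "w \<in> W (lam + 2 * of_nat a)" "E w = 0"
    then have "primitive a w" unfolding primitive_def by blast
    show "a \<le> max a0 (Max (insert 0 K))"
    proof (cases "a0 \<le> a")
      case True
      then have "a \<in> K" unfolding K_def using \<open>primitive a w\<close> by blast
      then show ?thesis using \<open>finite K\<close> by (simp add: le_max_iff_disj)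
    qed simp
  qed
qed

lemma even_shift_weights_bounded_above:
  assumes nil: "gen_kernel E = UNIV" and fin: "fin_dim s (W lam)"
  shows "\<exists>M. \<forall>m::int. W (lam + 2 * of_int m) \<noteq> {0} \<longrightarrow> m \<le> M"
proof -
  obtain M where M: "\<And>a w. w \<noteq> 0 \<Longrightarrow> w \<in> W (lam + 2 * of_nat a) \<Longrightarrow> E w = 0 \<Longrightarrow> a \<le> M"
    using primitive_vectors_bounded[OF fin] by blast
  have bound: "m \<le> int M" if nonzero: "W (lam + 2 * of_int m) \<noteq> {0}" for m :: int
  proof (cases "m < 0")
    case False
    then have "W (lam + 2 * of_nat (nat m)) \<noteq> {0}" using nonzero by simp
    then obtain v where v: "v \<in> W (lam + 2 * of_nat (nat m))" "v \<noteq> 0" by (rule obtain_nonzero_wspace)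
    obtain N where "(E ^^ N) v = 0" using nil unfolding gen_kernel_def by blast
    then obtain j where j: "(E ^^ j) v \<noteq> 0" "E ((E ^^ j) v) = 0"
      using last_nonzero_iterate[OF v(2)] by blast
    have "(E ^^ j) v \<in> W (lam + 2 * of_nat (nat m + j))"
      using funpow_E_wspace[OF v(1), of j] by (simp add: algebra_simps)
    then have "nat m + j \<le> M" by (rule M[OF j(1) _ j(2)])
    then show ?thesis by simp
  qed simp
  show ?thesis
  proof (intro exI[of _ "int M"] allI impI)
    fix m :: int assume "W (lam + 2 * of_int m) \<noteq> {0}"
    then show "m \<le> int M" by (rule bound)
  qed
qed

lemma shifts_nilpotency_E_H: "shifts_nilpotency E 1 H"
proof -
  have "shifts_nilpotency E 0 (\<lambda>v. s (-2) (E v))"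
    by (rule shifts_nilpotency_commuting[OF linear_compose_scale_right[OF linear_E]])
      (rule linear_scale[OF linear_E])
  moreover have "E (H v) = H (E v) + s (-2) (E v)" for v
    using HE[of v] by (simp add: algebra_simps)
  ultimately show ?thesis
    using shifts_nilpotency_commutator[where X = H, OF linear_E linear_0[OF linear_H]] by simp
qed

lemma shifts_nilpotency_E_F: "shifts_nilpotency E 2 F"
  using shifts_nilpotency_commutator[where X = F, OF linear_E linear_0[OF linear_F] EF shifts_nilpotency_E_H]
  by (simp add: numeral_2_eq_2)

lemma shifts_nilpotency_E_E: "shifts_nilpotency E 1 E"
proof -
  have "shifts_nilpotency E 0 (\<lambda>v. 0)"
    by (rule shifts_nilpotency_commuting) (simp_all add: linear_zero linear_0[OF linear_E])
  then show ?thesis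
    using shifts_nilpotency_commutator[where X = E and Y = "\<lambda>v. 0", OF linear_E linear_0[OF linear_E]]
    by simp
qed

lemma fin_dim_wspace_shifts:
  assumes "inj E" and "inj F" and "fin_dim s (W lam)"
  shows "fin_dim s (W (lam + 2 * of_int i))"
proof (induction i rule: int_induct[where k = 0])
  case base
  then show ?case using assms(3) by simp
next
  case (step1 i)
  show ?case
  proof (rule linear_inj_dim_le(1)[OF linear_F \<open>inj F\<close> _ step1(2)])
    fix x assume "x \<in> W (lam + 2 * of_int (i + 1))"
    from F_wspace[OF this] show "F x \<in> W (lam + 2 * of_int i)" by (simp add: algebra_simps)
  qed
next
  case (step2 i)
  show ?case
  proof (rule linear_inj_dim_le(1)[OF linear_E \<open>inj E\<close> _ step2(2)])
    fix x assume "x \<in> W (lam + 2 * of_int (i - 1))"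
    from E_wspace[OF this] show "E x \<in> W (lam + 2 * of_int i)" by (simp add: algebra_simps)
  qed
qed

lemma F_wspace_plus2: "v \<in> W (\<mu> + 2) \<Longrightarrow> F v \<in> W \<mu>"
  using F_wspace[of v "\<mu> + 2"] by simp

lemma image_E_wspace:
  assumes "inj E" and "inj F" and "fin_dim s (W (\<mu> + 2))"
  shows "E ` W \<mu> = W (\<mu> + 2)"
  by (rule linear_inj_image_eq[OF subspace_wspace linear_E \<open>inj E\<close> E_wspace
        linear_F \<open>inj F\<close> F_wspace_plus2 assms(3)])

lemma image_F_wspace:
  assumes "inj E" and "inj F" and "fin_dim s (W \<mu>)"
  shows "F ` W (\<mu> + 2) = W \<mu>"
  by (rule linear_inj_image_eq[OF subspace_wspace linear_F \<open>inj F\<close> F_wspace_plus2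
        linear_E \<open>inj E\<close> E_wspace assms(3)])

lemma sl2_module_twist: "sl2_module s F (\<lambda>v. - H v) E"
  by unfold_locales
    (simp_all add: linear_add[OF linear_E] linear_add[OF linear_H] linear_add[OF linear_F]
      linear_scale[OF linear_E] linear_scale[OF linear_H] linear_scale[OF linear_F]
      linear_neg[OF linear_F] linear_neg[OF linear_E] HF HE EF algebra_simps)

lemma wspace_twist: "wspace s (\<lambda>v. - H v) \<mu> = W (- \<mu>)"
  unfolding wspace_def by (auto simp: minus_equation_iff[of "H _"])

end

section \<open>Modules over g^(l)\<close>

locale g_module = sl2_module s E H F for s :: "complex \<Rightarrow> 'v::ab_group_add \<Rightarrow> 'v" and E H F +
  fixes n :: nat and P :: "nat \<Rightarrow> 'v \<Rightarrow> 'v"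
  assumes linear_P: "k \<le> n \<Longrightarrow> Vector_Spaces.linear s s (P k)"
    and HP_comm: "k \<le> n \<Longrightarrow> H (P k v) - P k (H v) = s (of_int (int n - 2 * int k)) (P k v)"
    and EP_comm: "k \<le> n \<Longrightarrow> E (P k v) - P k (E v) = (if k = 0 then 0 else s (of_nat k) (P (k - 1) v))"
    and FP_comm: "k \<le> n \<Longrightarrow> F (P k v) - P k (F v) = (if k = n then 0 else s (of_nat (n - k)) (P (k + 1) v))"
    and P_comm: "k \<le> n \<Longrightarrow> k' \<le> n \<Longrightarrow> P k (P k' v) = P k' (P k v)"

lemma gmod_iff_g_module: "gmod n s E H F P \<longleftrightarrow> g_module s E H F n P"
  unfolding gmod_def g_module_def g_module_axioms_def sl2_module_def sl2_module_axioms_def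
    cvector_space_def
  by blast

context g_module
begin

interpretation vector_space_pair s s ..

lemma HP: "k \<le> n \<Longrightarrow> H (P k v) = P k (H v) + s (of_int (int n - 2 * int k)) (P k v)"
  using HP_comm[of k v] by (simp add: diff_eq_eq add.commute)

lemma EP: "k \<le> n \<Longrightarrow> E (P k v) = P k (E v) + s (of_nat k) (P (k - 1) v)"
  using EP_comm[of k v] by (cases "k = 0") (simp_all add: diff_eq_eq add.commute)

text \<open>The index min (k + 1) n only matters when n - k \<noteq> 0.\<close>
lemma FP: "k \<le> n \<Longrightarrow> F (P k v) = P k (F v) + s (of_nat (n - k)) (P (min (k + 1) n) v)"
  using FP_comm[of k v] by (cases "k = n") (simp_all add: diff_eq_eq add.commute)

lemma P_wspace: "k \<le> n \<Longrightarrow> v \<in> W \<mu> \<Longrightarrow> P k v \<in> W (\<mu> + of_int (int n - 2 * int k))"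
  by (simp add: mem_wspace HP linear_scale[OF linear_P] algebra_simps)

lemma funpow_P_comm: "i \<le> n \<Longrightarrow> j \<le> n \<Longrightarrow> (P i ^^ r) (P j v) = P j ((P i ^^ r) v)"
  by (rule funpow_commute) (simp add: P_comm)

lemma submodI:
  assumes "subspace U" and "\<And>v. v \<in> U \<Longrightarrow> E v \<in> U" and "\<And>v. v \<in> U \<Longrightarrow> H v \<in> U"
    and "\<And>v. v \<in> U \<Longrightarrow> F v \<in> U" and "\<And>k v. k \<le> n \<Longrightarrow> v \<in> U \<Longrightarrow> P k v \<in> U"
  shows "submod n s E H F P U"
  using assms unfolding submod_def by blast

lemma shifts_nilpotency_E_P: "k \<le> n \<Longrightarrow> shifts_nilpotency E (Suc k) (P k)"
proof (induction k)
  case 0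
  have "shifts_nilpotency E 0 (\<lambda>v. 0)"
    by (rule shifts_nilpotency_commuting) (simp_all add: linear_zero linear_0[OF linear_E])
  then show ?case
    using shifts_nilpotency_commutator[where X = "P 0", OF linear_E linear_0[OF linear_P]] EP[of 0]
    by simp
next
  case (Suc k)
  then have "shifts_nilpotency E (Suc k) (\<lambda>v. s (of_nat (Suc k)) (P k v))"
    by (intro shifts_nilpotency_scale[OF linear_E]) simp
  then show ?case
    using shifts_nilpotency_commutator[where X = "P (Suc k)", OF linear_E linear_0[OF linear_P]]
      EP[OF Suc.prems] Suc.prems by simp
qed

lemma submod_gen_kernel_E: "submod n s E H F P (gen_kernel E)"
proof (rule submodI[OF subspace_gen_kernel[OF linear_E]])
  fix v assume "v \<in> gen_kernel E"
  then show "E v \<in> gen_kernel E" "H v \<in> gen_kernel E" "F v \<in> gen_kernel E"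
    by (rule gen_kernel_invariant[OF shifts_nilpotency_E_E],
        rule gen_kernel_invariant[OF shifts_nilpotency_E_H],
        rule gen_kernel_invariant[OF shifts_nilpotency_E_F])
next
  fix k v assume "k \<le> n" "v \<in> gen_kernel E"
  then show "P k v \<in> gen_kernel E" by (rule gen_kernel_invariant[OF shifts_nilpotency_E_P])
qed

text \<open>For j = n/2 the operator P j commutes with H, so any eigenvalue c is allowed.\<close>
lemma submod_gen_kernel_P:
  assumes j: "j \<le> n" and c: "c = 0 \<or> n = 2 * j"
  shows "submod n s E H F P (gen_kernel (\<lambda>v. P j v - s c v))"
proof -
  define T where "T v = P j v - s c v" for v
  have T: "Vector_Spaces.linear s s T"
    unfolding T_def by (rule linear_compose_sub[OF linear_P[OF j] linear_scale_self])
  have P_T: "P k (T v) = T (P k v)" if "k \<le> n" for k v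
    using that j by (simp add: T_def linear_diff[OF linear_P] linear_scale[OF linear_P] P_comm)
  have shifts_commuting_P: "shifts_nilpotency T 0 (\<lambda>v. s a (P k v))" if "k \<le> n" for a k
    by (rule shifts_nilpotency_commuting)
      (simp_all add: that linear_compose_scale_right[OF linear_P] P_T linear_scale[OF T])
  have "shifts_nilpotency T 1 E"
  proof -
    have XY: "T (E v) = E (T v) + s (- of_nat j) (P (j - 1) v)" for v
      using EP[OF j, of v] by (simp add: T_def linear_diff[OF linear_E] linear_scale[OF linear_E])
    show ?thesis
      using shifts_nilpotency_commutator[OF T linear_0[OF linear_E] XY shifts_commuting_P] j by simp
  qed
  moreover have "shifts_nilpotency T 1 F"
  proof -
    have XY: "T (F v) = F (T v) + s (- of_nat (n - j)) (P (min (j + 1) n) v)" for v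
      using FP[OF j, of v] by (simp add: T_def linear_diff[OF linear_F] linear_scale[OF linear_F])
    show ?thesis
      using shifts_nilpotency_commutator[OF T linear_0[OF linear_F] XY shifts_commuting_P] by simp
  qed
  moreover have "shifts_nilpotency T 1 H"
  proof -
    have XY: "T (H v) = H (T v) + s (- of_int (int n - 2 * int j)) (T v)" for v
      using HP[OF j, of v] c
      by (auto simp: T_def linear_diff[OF linear_H] linear_scale[OF linear_H] algebra_simps)
    have "shifts_nilpotency T 0 (\<lambda>v. s a (T v))" for a
      by (rule shifts_nilpotency_commuting)
        (simp_all add: linear_compose_scale_right[OF T] linear_scale[OF T])
    then show ?thesis
      using shifts_nilpotency_commutator[OF T linear_0[OF linear_H] XY] by simp
  qed
  moreover have "shifts_nilpotency T 1 (P k)" if "k \<le> n" for k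
    using shifts_nilpotency_commutator[where X = "P k" and Y = "\<lambda>v. s 0 (P k v)",
        OF T linear_0[OF linear_P[OF that]] _ shifts_commuting_P[OF that]] P_T[OF that] by simp
  ultimately show ?thesis
    unfolding T_def[symmetric]
    by (intro submodI subspace_gen_kernel[OF T]) (auto intro: gen_kernel_invariant)
qed

lemma submod_joint_kernel_P: "submod n s E H F P {v. \<forall>k\<le>n. P k v = 0}"
proof (rule submodI)
  show "subspace {v. \<forall>k\<le>n. P k v = 0}"
    unfolding subspace_def
    by (auto simp: linear_0[OF linear_P] linear_add[OF linear_P] linear_scale[OF linear_P])
next
  fix v assume v: "v \<in> {v. \<forall>k\<le>n. P k v = 0}"
  then have v0: "P k v = 0" if "k \<le> n" for k using that by simp
  show "E v \<in> {v. \<forall>k\<le>n. P k v = 0}"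
  proof (intro CollectI allI impI)
    fix k assume "k \<le> n"
    then show "P k (E v) = 0" using EP[of k v] v0[of k] v0[of "k - 1"] by (simp add: linear_0[OF linear_E])
  qed
  show "F v \<in> {v. \<forall>k\<le>n. P k v = 0}"
  proof (intro CollectI allI impI)
    fix k assume "k \<le> n"
    then show "P k (F v) = 0"
      using FP[of k v] v0[of k] v0[of "min (k + 1) n"] by (simp add: linear_0[OF linear_F])
  qed
  show "H v \<in> {v. \<forall>k\<le>n. P k v = 0}"
  proof (intro CollectI allI impI)
    fix k assume "k \<le> n"
    then show "P k (H v) = 0" using HP[of k v] v0[of k] by (simp add: linear_0[OF linear_H])
  qed
next
  fix k v assume "k \<le> n" "v \<in> {v. \<forall>k\<le>n. P k v = 0}"
  then show "P k v \<in> {v. \<forall>k\<le>n. P k v = 0}" by (simp add: P_comm linear_0[OF linear_P])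
qed

lemma submod_span_wspaces:
  assumes "\<And>\<mu>. \<mu> \<in> A \<Longrightarrow> \<mu> + 2 \<in> A" and "\<And>\<mu>. \<mu> \<in> A \<Longrightarrow> \<mu> - 2 \<in> A"
    and "\<And>\<mu> k. \<mu> \<in> A \<Longrightarrow> k \<le> n \<Longrightarrow> \<mu> + of_int (int n - 2 * int k) \<in> A"
  shows "submod n s E H F P (span (\<Union>\<mu>\<in>A. W \<mu>))"
proof -
  have invariant: "T x \<in> span (\<Union>\<mu>\<in>A. W \<mu>)"
    if T: "Vector_Spaces.linear s s T" and maps: "\<And>x \<mu>. \<mu> \<in> A \<Longrightarrow> x \<in> W \<mu> \<Longrightarrow> \<exists>\<mu>'\<in>A. T x \<in> W \<mu>'"
      and x: "x \<in> span (\<Union>\<mu>\<in>A. W \<mu>)" for T x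
  proof (rule linear_span_invariant[OF T _ x])
    fix y assume "y \<in> (\<Union>\<mu>\<in>A. W \<mu>)"
    then obtain \<mu> where "\<mu> \<in> A" "y \<in> W \<mu>" by blast
    then obtain \<mu>' where "\<mu>' \<in> A" "T y \<in> W \<mu>'" using maps by blast
    then show "T y \<in> span (\<Union>\<mu>\<in>A. W \<mu>)" by (intro span_base) blast
  qed
  show ?thesis
  proof (rule submodI)
    fix x assume x: "x \<in> span (\<Union>\<mu>\<in>A. W \<mu>)"
    show "E x \<in> span (\<Union>\<mu>\<in>A. W \<mu>)"
      by (rule invariant[OF linear_E _ x]) (use E_wspace assms(1) in blast)
    show "H x \<in> span (\<Union>\<mu>\<in>A. W \<mu>)"
      by (rule invariant[OF linear_H _ x]) (use H_wspace in blast)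
    show "F x \<in> span (\<Union>\<mu>\<in>A. W \<mu>)"
      by (rule invariant[OF linear_F _ x]) (use F_wspace assms(2) in blast)
  next
    fix k x assume k: "k \<le> n" and x: "x \<in> span (\<Union>\<mu>\<in>A. W \<mu>)"
    show "P k x \<in> span (\<Union>\<mu>\<in>A. W \<mu>)"
      by (rule invariant[OF linear_P[OF k] _ x]) (use P_wspace[OF k] assms(3)[OF _ k] in blast)
  qed simp
qed

lemma funpow_P_F:
  assumes k: "k \<le> n"
  shows "(P k ^^ Suc r) (F v)
    = F ((P k ^^ Suc r) v) + s (of_nat (Suc r)) (s (- of_nat (n - k)) (P (min (k + 1) n) ((P k ^^ r) v)))"
proof (rule funpow_commutator[OF linear_P[OF k]])
  fix v
  show "P k (F v) = F (P k v) + s (- of_nat (n - k)) (P (min (k + 1) n) v)"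
    using FP[OF k, of v] by (simp add: algebra_simps)
  show "P k (s (- of_nat (n - k)) (P (min (k + 1) n) v)) = s (- of_nat (n - k)) (P (min (k + 1) n) (P k v))"
    using k by (simp add: linear_scale[OF linear_P] P_comm)
qed

text \<open>A = P k and B = P (k + 1) commute and [A, F] = -(n - k) B, so applying the Leibniz rule
  for A^(p+1) and for B^(q+1) to F trades one power of A for two powers of B.\<close>
lemma nilpotent_P_step:
  assumes k: "k < n" and nil: "\<And>v. (P k ^^ Suc p) ((P (Suc k) ^^ q) v) = 0"
  shows "(P k ^^ p) ((P (Suc k) ^^ Suc (Suc q)) v) = 0"
proof -
  have kn: "k \<le> n" and k1: "Suc k \<le> n" and min_k: "min (k + 1) n = Suc k" using k by auto
  have lin_A: "Vector_Spaces.linear s s (P k ^^ Suc p)" by (rule linear_funpow[OF linear_P[OF kn]])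
  define m where "m = min (Suc k + 1) n"
  have m: "m \<le> n" by (simp add: m_def)
  define Z where "Z = (P (Suc k) ^^ Suc q) v"
  have zero: "(P k ^^ Suc p) ((P (Suc k) ^^ Suc q) (F v)) = 0"
    using nil[of "P (Suc k) (F v)"] by (simp only: funpow_Suc_right comp_apply)
  have expand: "(P (Suc k) ^^ Suc q) (F v)
      = F Z + s (of_nat (Suc q)) (s (- of_nat (n - Suc k)) (P m ((P (Suc k) ^^ q) v)))"
    unfolding Z_def m_def by (rule funpow_P_F[OF k1])
  have "(P k ^^ Suc p) (P m ((P (Suc k) ^^ q) v)) = 0"
    by (simp only: funpow_P_comm[OF kn m] nil linear_0[OF linear_P[OF m]])
  with zero have AFZ: "(P k ^^ Suc p) (F Z) = 0"
    by (simp only: expand linear_add[OF lin_A] linear_scale[OF lin_A] scale_zero_right add_0_right)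
  have AZ: "(P k ^^ Suc p) Z = 0"
    using nil[of "P (Suc k) v"] by (simp only: Z_def funpow_Suc_right comp_apply)
  have "(P k ^^ Suc p) (F Z)
      = F ((P k ^^ Suc p) Z) + s (of_nat (Suc p)) (s (- of_nat (n - k)) (P (Suc k) ((P k ^^ p) Z)))"
    using funpow_P_F[OF kn] by (simp only: min_k)
  then have "s (of_nat (Suc p) * - of_nat (n - k)) (P (Suc k) ((P k ^^ p) Z)) = 0"
    using AFZ AZ linear_0[OF linear_F] by simp
  then have "P (Suc k) ((P k ^^ p) Z) = 0" using k by (simp del: of_nat_Suc)
  then show ?thesis
    using funpow_P_comm[OF kn k1, of p Z] by (simp add: Z_def)
qed

lemma nilpotent_P_Suc:
  assumes k: "k < n" and nil: "\<And>v. (P k ^^ m) v = 0"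
  shows "(P (Suc k) ^^ (2 * m)) v = 0"
proof -
  have "(P k ^^ (m - i)) ((P (Suc k) ^^ (2 * i)) v) = 0" if "i \<le> m" for i v
    using that
  proof (induction i arbitrary: v)
    case 0
    then show ?case using nil by simp
  next
    case (Suc i)
    then have "(P k ^^ Suc (m - Suc i)) ((P (Suc k) ^^ (2 * i)) w) = 0" for w
      by (simp add: Suc_diff_Suc)
    from nilpotent_P_step[OF k this] show ?case by simp
  qed
  from this[of m] show ?thesis by simp
qed

lemma nilpotent_P_all:
  assumes nil: "\<And>v. (P 0 ^^ N) v = 0" and "k \<le> n"
  obtains M where "\<And>v. (P k ^^ M) v = 0"
  using \<open>k \<le> n\<close> that
proof (induction k arbitrary: thesis)
  case 0
  then show ?case using nil by blast
next
  case (Suc k)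
  then obtain M where "\<And>v. (P k ^^ M) v = 0" by auto
  then show ?case using Suc.prems nilpotent_P_Suc[of k M] by auto
qed

lemma g_module_twist: "g_module s F (\<lambda>v. - H v) E n (\<lambda>k. P (n - k))"
  unfolding g_module_def g_module_axioms_def
proof (intro conjI sl2_module_twist allI impI)
  fix k v assume k: "k \<le> n"
  have nk: "n - k \<le> n" by simp
  show "Vector_Spaces.linear s s (P (n - k))" by (rule linear_P[OF nk])
  have "int (n - k) = int n - int k" using k by simp
  then show "- H (P (n - k) v) - P (n - k) (- H v) = s (of_int (int n - 2 * int k)) (P (n - k) v)"
    using HP[OF nk, of v] by (simp add: linear_neg[OF linear_P[OF nk]] algebra_simps)
  show "F (P (n - k) v) - P (n - k) (F v)
      = (if k = 0 then 0 else s (of_nat k) (P (n - (k - 1)) v))"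
    using FP[OF nk, of v] k by (cases "k = 0") (auto simp: min_def Suc_diff_le)
  show "E (P (n - k) v) - P (n - k) (E v)
      = (if k = n then 0 else s (of_nat (n - k)) (P (n - (k + 1)) v))"
    using EP[OF nk, of v] k by (cases "k = n") (auto simp: diff_diff_add)
next
  fix k k' v assume "k \<le> n" "k' \<le> n"
  show "P (n - k) (P (n - k') v) = P (n - k') (P (n - k) v)" by (rule P_comm) auto
qed

lemma submod_twist_iff:
  "submod n s F (\<lambda>v. - H v) E (\<lambda>k. P (n - k)) U \<longleftrightarrow> submod n s E H F P U"
proof -
  have neg: "(\<lambda>v. - H v) ` U \<subseteq> U \<longleftrightarrow> H ` U \<subseteq> U" if "subspace U"
  proof
    assume "(\<lambda>v. - H v) ` U \<subseteq> U"
    then have "- (- H v) \<in> U" if "v \<in> U" for v using subspace_neg[OF \<open>subspace U\<close>] that by blast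
    then show "H ` U \<subseteq> U" by auto
  next
    assume "H ` U \<subseteq> U"
    then show "(\<lambda>v. - H v) ` U \<subseteq> U" using subspace_neg[OF \<open>subspace U\<close>] by blast
  qed
  have reindex: "(\<forall>k\<le>n. P (n - k) ` U \<subseteq> U) \<longleftrightarrow> (\<forall>k\<le>n. P k ` U \<subseteq> U)"
  proof (intro iffI allI impI)
    fix k assume twisted: "\<forall>k\<le>n. P (n - k) ` U \<subseteq> U" and "k \<le> n"
    show "P k ` U \<subseteq> U" using twisted[rule_format, of "n - k"] \<open>k \<le> n\<close> by simp
  qed simp
  show ?thesis
    unfolding submod_def reindex by (cases "subspace U") (simp_all only: neg conj_ac simp_thms)
qed

lemma lowest_mod_if_twist_highest:
  assumes "highest_mod n s F (\<lambda>v. - H v) E (\<lambda>k. P (n - k))"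
  shows "lowest_mod n s E H F P"
proof -
  obtain v \<mu> where v: "v \<noteq> 0" "- H v = s \<mu> v" "F v = 0"
      "\<forall>k\<le>n. 2 * k < n \<longrightarrow> P (n - k) v = 0"
      "even n \<longrightarrow> (\<exists>c. P (n - n div 2) v = s c v)"
      "generated_by n s F (\<lambda>v. - H v) E (\<lambda>k. P (n - k)) v"
    using assms unfolding highest_mod_def by blast
  have "H v = s (- \<mu>) v" using v(2) by (simp add: minus_equation_iff[of "H v"])
  moreover have "P k v = 0" if "k \<le> n" "n < 2 * k" for k
    using v(4)[rule_format, of "n - k"] that by simp
  moreover have "even n \<longrightarrow> (\<exists>c. P (n div 2) v = s c v)"
    using v(5) by auto
  moreover have "generated_by n s E H F P v"
    using v(6) unfolding generated_by_def submod_twist_iff .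
  ultimately show ?thesis unfolding lowest_mod_def using v(1,3) by blast
qed

end

section \<open>Simple weight modules\<close>

locale simple_weight_g_module = g_module s E H F n P
  for s :: "complex \<Rightarrow> 'v::ab_group_add \<Rightarrow> 'v" and E H F n P +
  fixes lam :: complex
  assumes simple: "simple_mod n s E H F P"
    and weight: "weight_mod s H"
    and supp_in_lattice: "\<forall>\<mu>\<in>supp s H. \<mu> - lam \<in> \<int>"
    and wspace_lam_nonzero: "W lam \<noteq> {0}"
    and fin_dim_wspace_lam: "fin_dim s (W lam)"
    and P_nonzero: "\<exists>k\<le>n. \<exists>v. P k v \<noteq> 0"
begin

interpretation vector_space_pair s s ..

lemma submod_eq_UNIV: "submod n s E H F P U \<Longrightarrow> x \<in> U \<Longrightarrow> x \<noteq> 0 \<Longrightarrow> U = UNIV"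
  using simple unfolding simple_mod_def by blast

lemma generated_by_nonzero: "v \<noteq> 0 \<Longrightarrow> generated_by n s E H F P v"
  unfolding generated_by_def using submod_eq_UNIV by blast

lemma joint_kernel_P_trivial:
  assumes "\<And>k. k \<le> n \<Longrightarrow> P k v = 0"
  shows "v = 0"
proof (rule ccontr)
  assume "v \<noteq> 0"
  then have "{v. \<forall>k\<le>n. P k v = 0} = UNIV"
    using submod_eq_UNIV[OF submod_joint_kernel_P] assms by blast
  then show False using P_nonzero by blast
qed

lemma wspace_off_lattice: "\<mu> - lam \<notin> \<int> \<Longrightarrow> W \<mu> = {0}"
  using supp_in_lattice unfolding supp_def by blast

lemma weights_bounded_above:
  assumes nil: "gen_kernel E = UNIV"
  obtains M where "\<And>m::int. (even n \<longrightarrow> even m) \<Longrightarrow> W (lam + of_int m) \<noteq> {0} \<Longrightarrow> m \<le> M"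
proof -
  from even_shift_weights_bounded_above[OF nil fin_dim_wspace_lam]
  obtain M where M: "\<forall>m::int. W (lam + 2 * of_int m) \<noteq> {0} \<longrightarrow> m \<le> M" ..
  have even_bound: "m \<le> 2 * M" if "even m" and "W (lam + of_int m) \<noteq> {0}" for m :: int
  proof -
    have "2 * (m div 2) = m" using \<open>even m\<close> by simp
    from arg_cong[OF this, of "of_int :: int \<Rightarrow> complex"]
    have "W (lam + 2 * of_int (m div 2)) \<noteq> {0}" using that(2) by simp
    then have "m div 2 \<le> M" by (rule M[rule_format])
    then show ?thesis using \<open>2 * (m div 2) = m\<close> by linarith
  qed
  show ?thesis
  proof (rule that)
    fix m :: int assume parity: "even n \<longrightarrow> even m" and nonzero: "W (lam + of_int m) \<noteq> {0}"
    from nonzero obtain v where v: "v \<in> W (lam + of_int m)" "v \<noteq> 0" by (rule obtain_nonzero_wspace)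
    show "m \<le> 2 * M + int n"
    proof (cases "even m")
      case True
      then show ?thesis using even_bound[OF True nonzero] by simp
    next
      case False
      then have "odd n" using parity by blast
      obtain k where k: "k \<le> n" "P k v \<noteq> 0" using joint_kernel_P_trivial v(2) by blast
      have "P k v \<in> W (lam + of_int (m + int n - 2 * int k))"
        using P_wspace[OF k(1) v(1)] by (simp add: algebra_simps)
      then have "W (lam + of_int (m + int n - 2 * int k)) \<noteq> {0}" using k(2) by auto
      moreover have "even (m + int n - 2 * int k)" using False \<open>odd n\<close> by simp
      ultimately have "m + int n - 2 * int k \<le> 2 * M" using even_bound by blast
      then show ?thesis using k(1) by linarith
    qed
  qed
qed

lemma maximal_weight_exists:
  assumes nil: "gen_kernel E = UNIV"
  shows "\<exists>\<nu>. W \<nu> \<noteq> {0} \<and> (\<forall>w\<in>W \<nu>. E w = 0 \<and> (\<forall>k\<le>n. 2 * k < n \<longrightarrow> P k w = 0))"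
proof -
  obtain M where M: "\<And>m::int. (even n \<longrightarrow> even m) \<Longrightarrow> W (lam + of_int m) \<noteq> {0} \<Longrightarrow> m \<le> M"
    using weights_bounded_above[OF nil] by blast
  define S where "S = {m::int. 0 \<le> m \<and> (even n \<longrightarrow> even m) \<and> W (lam + of_int m) \<noteq> {0}}"
  have "S \<subseteq> {0..M}"
  proof
    fix m assume "m \<in> S"
    then show "m \<in> {0..M}" using M[of m] unfolding S_def by simp
  qed
  then have fin: "finite S" by (rule finite_subset) simp
  have "0 \<in> S" using wspace_lam_nonzero by (simp add: S_def)
  define top where "top = Max S"
  have top_S: "top \<in> S" using Max_in[OF fin] \<open>0 \<in> S\<close> unfolding top_def by auto
  have above_zero: "W (lam + of_int m) = {0}" if "even n \<longrightarrow> even m" "top < m" for m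
  proof (rule ccontr)
    assume "W (lam + of_int m) \<noteq> {0}"
    moreover have "0 \<le> m" using top_S that(2) by (simp add: S_def)
    ultimately have "m \<in> S" using that(1) by (simp add: S_def)
    then show False using Max_ge[OF fin, of m] that(2) unfolding top_def by simp
  qed
  show ?thesis
  proof (intro exI[of _ "lam + of_int top"] conjI)
    show "W (lam + of_int top) \<noteq> {0}" using top_S by (simp add: S_def)
    show "\<forall>w\<in>W (lam + of_int top). E w = 0 \<and> (\<forall>k\<le>n. 2 * k < n \<longrightarrow> P k w = 0)"
    proof (intro ballI conjI allI impI)
      fix w assume w: "w \<in> W (lam + of_int top)"
      have "E w \<in> W (lam + of_int (top + 2))"
        using E_wspace[OF w] by (simp add: algebra_simps)
      moreover have "W (lam + of_int (top + 2)) = {0}"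
        using top_S by (intro above_zero) (simp_all add: S_def)
      ultimately show "E w = 0" by simp
      fix k assume "k \<le> n" "2 * k < n"
      have "P k w \<in> W (lam + of_int (top + (int n - 2 * int k)))"
        using P_wspace[OF \<open>k \<le> n\<close> w] by (simp add: algebra_simps)
      moreover have "W (lam + of_int (top + (int n - 2 * int k))) = {0}"
        using top_S \<open>2 * k < n\<close> by (intro above_zero) (simp_all add: S_def)
      ultimately show "P k w = 0" by simp
    qed
  qed
qed

lemma middle_P_eigenvector_in_wspace:
  assumes nl: "n = 2 * l" and "W \<nu> \<noteq> {0}"
  obtains w c where "w \<in> W \<nu>" "w \<noteq> 0" "P l w = s c w"
proof -
  have l: "l \<le> n" using nl by simp
  have Pl_wspace: "P l x \<in> W \<mu>" if "x \<in> W \<mu>" for x \<mu>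
    using P_wspace[OF l that] by (simp add: nl)
  obtain u c where "u \<noteq> 0" "P l u = s c u"
    by (rule eigenvector_exists[OF linear_P[OF l] subspace_wspace Pl_wspace fin_dim_wspace_lam
          wspace_lam_nonzero])
  define T where "T v = P l v - s c v" for v
  have "u \<in> gen_kernel T" unfolding gen_kernel_def T_def using \<open>P l u = s c u\<close>
    by (intro CollectI exI[of _ 1]) simp
  moreover have "submod n s E H F P (gen_kernel T)"
    unfolding T_def by (rule submod_gen_kernel_P[OF l]) (simp add: nl)
  ultimately have "gen_kernel T = UNIV" using submod_eq_UNIV \<open>u \<noteq> 0\<close> by blast
  obtain w where w: "w \<in> W \<nu>" "w \<noteq> 0" using \<open>W \<nu> \<noteq> {0}\<close> by (rule obtain_nonzero_wspace)
  obtain N where "(T ^^ N) w = 0" using \<open>gen_kernel T = UNIV\<close> unfolding gen_kernel_def by blast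
  then obtain j where j: "(T ^^ j) w \<noteq> 0" "T ((T ^^ j) w) = 0"
    using last_nonzero_iterate[OF w(2)] by blast
  have T_wspace: "T x \<in> W \<nu>" if "x \<in> W \<nu>" for x
    unfolding T_def using Pl_wspace[OF that] that subspace_wspace subspace_diff subspace_scale
    by blast
  have "(T ^^ i) w \<in> W \<nu>" for i by (induction i) (simp_all add: w T_wspace)
  moreover have "P l ((T ^^ j) w) = s c ((T ^^ j) w)" using j(2) by (simp add: T_def)
  ultimately show ?thesis using that j(1) by blast
qed

lemma highest_mod_if_E_locally_nilpotent:
  assumes nil: "gen_kernel E = UNIV"
  shows "highest_mod n s E H F P"
proof -
  obtain \<nu> where \<nu>: "W \<nu> \<noteq> {0}"
    and top: "\<forall>w\<in>W \<nu>. E w = 0 \<and> (\<forall>k\<le>n. 2 * k < n \<longrightarrow> P k w = 0)"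
    using maximal_weight_exists[OF nil] by (elim exE conjE)
  obtain w c where w: "w \<in> W \<nu>" "w \<noteq> 0" and middle: "even n \<longrightarrow> P (n div 2) w = s c w"
  proof (cases "even n")
    case True
    then have "n = 2 * (n div 2)" by simp
    from middle_P_eigenvector_in_wspace[OF this \<nu>] obtain w c
      where "w \<in> W \<nu>" "w \<noteq> 0" "P (n div 2) w = s c w" .
    then show ?thesis by (intro that[of w c]) simp_all
  next
    case False
    obtain w where "w \<in> W \<nu>" "w \<noteq> 0" using \<nu> by (rule obtain_nonzero_wspace)
    then show ?thesis using False by (intro that[of w 0]) simp_all
  qed
  show ?thesis
    unfolding highest_mod_def
  proof (rule exI[of _ w], rule exI[of _ \<nu>], intro conjI allI impI)
    show "H w = s \<nu> w" using w(1) by (simp add: mem_wspace)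
    show "E w = 0" using top w(1) by blast
    show "P k w = 0" if "k \<le> n" "2 * k < n" for k using top w(1) that by blast
    show "\<exists>c. P (n div 2) w = s c w" if "even n" using middle that by blast
    show "generated_by n s E H F P w" by (rule generated_by_nonzero[OF w(2)])
  qed (rule w(2))
qed

lemma inj_E_if_not_highest:
  assumes "\<not> highest_mod n s E H F P"
  shows "inj E"
  unfolding linear_inj_iff_eq_0[OF linear_E]
proof (intro allI impI, rule ccontr)
  fix x assume "E x = 0" "x \<noteq> 0"
  then have "x \<in> gen_kernel E" unfolding gen_kernel_def by (intro CollectI exI[of _ 1]) simp
  then have "gen_kernel E = UNIV" using submod_eq_UNIV[OF submod_gen_kernel_E] \<open>x \<noteq> 0\<close> by blast
  then show False using highest_mod_if_E_locally_nilpotent assms by blast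
qed

lemma simple_weight_g_module_twist:
  "simple_weight_g_module s F (\<lambda>v. - H v) E n (\<lambda>k. P (n - k)) (- lam)"
proof -
  interpret twist: g_module s F "\<lambda>v. - H v" E n "\<lambda>k. P (n - k)" by (rule g_module_twist)
  have weights: "(\<Union>\<mu>. wspace s (\<lambda>v. - H v) \<mu>) = (\<Union>\<mu>. W \<mu>)"
    unfolding wspace_twist
  proof (intro equalityI subsetI)
    fix x assume "x \<in> (\<Union>\<mu>. W \<mu>)"
    then obtain \<mu> where "x \<in> W (- (- \<mu>))" by auto
    then show "x \<in> (\<Union>\<mu>. W (- \<mu>))" by blast
  qed auto
  show ?thesis
  proof unfold_locales
    show "simple_mod n s F (\<lambda>v. - H v) E (\<lambda>k. P (n - k))"
      using simple unfolding simple_mod_def submod_twist_iff .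
    show "weight_mod s (\<lambda>v. - H v)" using weight unfolding weight_mod_def weights .
    show "\<forall>\<mu>\<in>supp s (\<lambda>v. - H v). \<mu> - - lam \<in> \<int>"
    proof
      fix \<mu> assume "\<mu> \<in> supp s (\<lambda>v. - H v)"
      then have "- \<mu> - lam \<in> \<int>" using supp_in_lattice unfolding supp_def wspace_twist by simp
      then have "- (- \<mu> - lam) \<in> \<int>" by (rule Ints_minus)
      then show "\<mu> - - lam \<in> \<int>" by (simp add: add.commute)
    qed
    show "wspace s (\<lambda>v. - H v) (- lam) \<noteq> {0}" using wspace_lam_nonzero by (simp add: wspace_twist)
    show "fin_dim s (wspace s (\<lambda>v. - H v) (- lam))" using fin_dim_wspace_lam by (simp add: wspace_twist)
    obtain k v where "k \<le> n" "P k v \<noteq> 0" using P_nonzero by blast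
    then show "\<exists>k\<le>n. \<exists>v. P (n - k) v \<noteq> 0" by (intro exI[of _ "n - k"]) auto
  qed
qed

lemma inj_F_if_not_lowest:
  assumes "\<not> lowest_mod n s E H F P"
  shows "inj F"
proof -
  interpret twist: simple_weight_g_module s F "\<lambda>v. - H v" E n "\<lambda>k. P (n - k)" "- lam"
    by (rule simple_weight_g_module_twist)
  show ?thesis using twist.inj_E_if_not_highest lowest_mod_if_twist_highest assms by blast
qed

lemma wspace_odd_shift_zero:
  assumes "even n" and "odd m"
  shows "W (lam + of_int m) = {0}"
proof (rule ccontr)
  define A where "A = {lam + of_int m' | m'. odd m'}"
  assume "W (lam + of_int m) \<noteq> {0}"
  then obtain v where v: "v \<in> W (lam + of_int m)" "v \<noteq> 0" by (rule obtain_nonzero_wspace)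
  have "submod n s E H F P (span (\<Union>\<mu>\<in>A. W \<mu>))"
  proof (rule submod_span_wspaces)
    fix \<mu> k assume "\<mu> \<in> A"
    then obtain m' where m': "odd m'" "\<mu> = lam + of_int m'" unfolding A_def by blast
    show "\<mu> + 2 \<in> A" unfolding A_def using m' by (intro CollectI exI[of _ "m' + 2"]) simp
    show "\<mu> - 2 \<in> A" unfolding A_def using m' by (intro CollectI exI[of _ "m' - 2"]) simp
    show "\<mu> + of_int (int n - 2 * int k) \<in> A"
      unfolding A_def using m' \<open>even n\<close> by (intro CollectI exI[of _ "m' + (int n - 2 * int k)"]) simp
  qed
  moreover have "v \<in> span (\<Union>\<mu>\<in>A. W \<mu>)"
    using v(1) \<open>odd m\<close> unfolding A_def by (intro span_base) blast
  ultimately have span_UNIV: "span (\<Union>\<mu>\<in>A. W \<mu>) = UNIV" using submod_eq_UNIV v(2) by blast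
  obtain w where w: "w \<in> W lam" "w \<noteq> 0" using wspace_lam_nonzero by (rule obtain_nonzero_wspace)
  have "lam \<notin> A" unfolding A_def by auto
  moreover have "w \<in> span (\<Union>\<mu>\<in>A. {v. H v = s \<mu> v})" using span_UNIV by (simp add: wspace_def)
  moreover have "H w = s lam w" using w(1) by (simp add: mem_wspace)
  ultimately have "w = 0" using eigenvector_in_span_of_other_eigenspaces[OF linear_H] by blast
  with w(2) show False by contradiction
qed

lemma obtain_lattice_shift:
  assumes "\<mu> - lam \<in> \<int>"
  obtains m where "\<mu> = lam + of_int m"
proof -
  obtain m where "\<mu> - lam = of_int m" using assms by (rule Ints_cases)
  then show ?thesis using that by (simp add: diff_eq_eq add.commute)
qed

lemma P0_wspace_odd_shift:
  assumes "odd n" and "odd m"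
  obtains i where "\<And>v. v \<in> W (lam + of_int m) \<Longrightarrow> P 0 v \<in> W (lam + 2 * of_int i)"
proof -
  have "even (m + int n)" using assms by simp
  then obtain i where i: "m + int n = 2 * i" by (rule evenE)
  have shift: "lam + of_int m + of_int (int n - 2 * int 0) = lam + 2 * of_int i"
    using arg_cong[OF i, of "of_int :: int \<Rightarrow> complex"] by (simp add: algebra_simps)
  show ?thesis
  proof (rule that[of i])
    fix v assume "v \<in> W (lam + of_int m)"
    from P_wspace[OF le0 this] show "P 0 v \<in> W (lam + 2 * of_int i)" by (simp only: shift)
  qed
qed

lemma P0_kills_even_shifts:
  assumes "inj E" and "inj F" and N: "\<And>v. v \<in> W lam \<Longrightarrow> (P 0 ^^ N) v = 0"
  shows "v \<in> W (lam + 2 * of_int i) \<Longrightarrow> (P 0 ^^ N) v = 0"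
proof -
  have P0_E: "(P 0 ^^ N) (E u) = E ((P 0 ^^ N) u)" for u
    by (rule funpow_commute) (simp add: EP)
  show "v \<in> W (lam + 2 * of_int i) \<Longrightarrow> (P 0 ^^ N) v = 0"
  proof (induction i arbitrary: v rule: int_induct[where k = 0])
    case base
    then show ?case using N by simp
  next
    case (step1 i)
    have "W (lam + 2 * of_int (i + 1)) = E ` W (lam + 2 * of_int i)"
      using image_E_wspace[OF assms(1,2)] fin_dim_wspace_shifts[OF assms(1,2) fin_dim_wspace_lam, of "i + 1"]
      by (simp add: algebra_simps)
    then obtain u where "u \<in> W (lam + 2 * of_int i)" "v = E u" using step1.prems by blast
    then show ?case using step1.IH P0_E linear_0[OF linear_E] by simp
  next
    case (step2 i)
    have "E v \<in> W (lam + 2 * of_int i)" using E_wspace[OF step2.prems] by (simp add: algebra_simps)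
    then have "(P 0 ^^ N) (E v) = 0" by (rule step2.IH)
    then have "E ((P 0 ^^ N) v) = E 0" using P0_E linear_0[OF linear_E] by simp
    then show ?case by (rule injD[OF \<open>inj E\<close>])
  qed
qed

lemma nilpotent_P0_if_locally_nilpotent:
  assumes "odd n" and "inj E" and "inj F" and nil0: "gen_kernel (P 0) = UNIV"
  obtains N where "\<And>v. (P 0 ^^ N) v = 0"
proof -
  obtain N where N: "\<And>v. v \<in> W lam \<Longrightarrow> (P 0 ^^ N) v = 0"
    using uniformly_nilpotent_on_fin_dim[OF linear_P[OF le0] fin_dim_wspace_lam] nil0 by blast
  note even_shifts = P0_kills_even_shifts[OF assms(2,3) N]
  have killed: "(P 0 ^^ Suc N) v = 0" if v: "v \<in> W \<mu>" for \<mu> v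
  proof (cases "\<mu> - lam \<in> \<int>")
    case False
    then have "v = 0" using wspace_off_lattice v by blast
    then show ?thesis using linear_0[OF linear_funpow[OF linear_P[OF le0]]] by blast
  next
    case True
    then obtain m where m: "\<mu> = lam + of_int m" by (rule obtain_lattice_shift)
    show ?thesis
    proof (cases "even m")
      case True
      then obtain i where "m = 2 * i" by (rule evenE)
      then have "(P 0 ^^ N) v = 0" using even_shifts[of v i] v m by simp
      then show ?thesis using linear_0[OF linear_P[OF le0]] by simp
    next
      case False
      obtain i where "\<And>v. v \<in> W (lam + of_int m) \<Longrightarrow> P 0 v \<in> W (lam + 2 * of_int i)"
        using P0_wspace_odd_shift[OF \<open>odd n\<close> False] by blast
      then have "P 0 v \<in> W (lam + 2 * of_int i)" using v m by simp
      then show ?thesis using even_shifts by (simp only: funpow_Suc_right comp_apply)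
    qed
  qed
  have "v \<in> span (\<Union>\<mu>. W \<mu>)" for v using weight unfolding weight_mod_def by blast
  then have "(P 0 ^^ Suc N) v = 0" for v
    using linear_eq_0_on_span[OF linear_funpow[OF linear_P[OF le0]]] killed by blast
  then show ?thesis by (rule that)
qed

lemma inj_P0:
  assumes "odd n" and "inj E" and "inj F"
  shows "inj (P 0)"
  unfolding linear_inj_iff_eq_0[OF linear_P[OF le0]]
proof (intro allI impI, rule ccontr)
  fix x assume "P 0 x = 0" "x \<noteq> 0"
  have "(\<lambda>v. P 0 v - s 0 v) = P 0" by simp
  then have "submod n s E H F P (gen_kernel (P 0))" using submod_gen_kernel_P[of 0 0] by simp
  moreover have "x \<in> gen_kernel (P 0)"
    unfolding gen_kernel_def using \<open>P 0 x = 0\<close> by (intro CollectI exI[of _ 1]) simp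
  ultimately have "gen_kernel (P 0) = UNIV" using submod_eq_UNIV \<open>x \<noteq> 0\<close> by blast
  then obtain N where "\<And>v. (P 0 ^^ N) v = 0"
    using nilpotent_P0_if_locally_nilpotent[OF assms] by blast
  then have "k \<le> n \<Longrightarrow> v \<in> gen_kernel (P k)" for k v
    using nilpotent_P_all unfolding gen_kernel_def by blast
  then obtain u where "u \<noteq> 0" "\<And>k. k < Suc n \<Longrightarrow> P k u = 0"
    using common_kernel_vector[of "Suc n" P x] linear_P P_comm \<open>x \<noteq> 0\<close> by (metis less_Suc_eq_le)
  then show False using joint_kernel_P_trivial by (meson less_Suc_eq_le)
qed

lemma inj_Pn:
  assumes "odd n" and "inj E" and "inj F"
  shows "inj (P n)"
proof -
  interpret twist: simple_weight_g_module s F "\<lambda>v. - H v" E n "\<lambda>k. P (n - k)" "- lam"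
    by (rule simple_weight_g_module_twist)
  show ?thesis using twist.inj_P0[OF assms(1,3,2)] by simp
qed

lemma fin_dim_wspace:
  assumes "inj E" and "inj F"
  shows "fin_dim s (W \<mu>)"
proof (cases "\<mu> - lam \<in> \<int>")
  case False
  then show ?thesis using wspace_off_lattice by (simp add: fin_dim_def exI[of _ "{}"])
next
  case True
  then obtain m where m: "\<mu> = lam + of_int m" by (rule obtain_lattice_shift)
  show ?thesis
  proof (cases "even m")
    case True
    then obtain i where "m = 2 * i" by (rule evenE)
    then show ?thesis using fin_dim_wspace_shifts[OF assms fin_dim_wspace_lam, of i] m by simp
  next
    case odd_m: False
    show ?thesis
    proof (cases "even n")
      case True
      then show ?thesis
        using wspace_odd_shift_zero[OF True odd_m] m by (simp add: fin_dim_def exI[of _ "{}"])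
    next
      case False
      obtain i where "\<And>v. v \<in> W (lam + of_int m) \<Longrightarrow> P 0 v \<in> W (lam + 2 * of_int i)"
        using P0_wspace_odd_shift[OF False odd_m] by blast
      then have "\<And>x. x \<in> W \<mu> \<Longrightarrow> P 0 x \<in> W (lam + 2 * of_int i)" by (simp add: m)
      then show ?thesis
        by (rule linear_inj_dim_le(1)[OF linear_P[OF le0] inj_P0[OF False assms] _
              fin_dim_wspace_shifts[OF assms fin_dim_wspace_lam]])
    qed
  qed
qed

lemma surj_if_wspaces_in_range:
  assumes T: "Vector_Spaces.linear s s T" and "\<And>\<mu>. W \<mu> \<subseteq> range T"
  shows "surj T"
proof -
  have "span (\<Union>\<mu>. W \<mu>) \<subseteq> range T"
    using assms(2) linear_subspace_image[OF T subspace_UNIV] by (intro span_minimal) auto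
  then show ?thesis using weight unfolding weight_mod_def by blast
qed

lemma bij_E_F:
  assumes "inj E" and "inj F"
  shows "bij E" and "bij F"
proof -
  have "E ` W (\<mu> - 2) = W \<mu>" "F ` W (\<mu> + 2) = W \<mu>" for \<mu>
    using image_E_wspace[OF assms fin_dim_wspace[OF assms], of "\<mu> - 2"]
      image_F_wspace[OF assms fin_dim_wspace[OF assms]] by simp_all
  then have "W \<mu> \<subseteq> range E" "W \<mu> \<subseteq> range F" for \<mu> by (metis image_subset_iff rangeI)+
  then show "bij E" "bij F"
    using surj_if_wspaces_in_range[OF linear_E] surj_if_wspaces_in_range[OF linear_F] assms
    by (simp_all add: bij_def)
qed

lemma dim_wspace_shift_even:
  assumes "inj E" and "inj F"
  shows "dim (W (\<mu> + 2 * of_int i)) = dim (W \<mu>)"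
proof -
  have step: "dim (W (\<nu> + 2)) = dim (W \<nu>)" for \<nu>
    using image_E_wspace[OF assms fin_dim_wspace[OF assms]] linear_inj_dim_image[OF linear_E \<open>inj E\<close>]
    by metis
  show ?thesis
  proof (induction i rule: int_induct[where k = 0])
    case (step1 i)
    then show ?case using step[of "\<mu> + 2 * of_int i"] by (simp add: algebra_simps)
  next
    case (step2 i)
    then show ?case using step[of "\<mu> + 2 * of_int (i - 1)"] by (simp add: algebra_simps)
  qed simp
qed

text \<open>For odd n, P 0 and P n embed each weight space into the other parity class.\<close>
lemma dim_wspace_shift_odd:
  assumes "odd n" and "inj E" and "inj F"
  shows "dim (W (\<mu> + of_int i)) = dim (W \<mu>)"
proof -
  obtain t where t: "n = 2 * t + 1" using \<open>odd n\<close> by (rule oddE)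
  have step: "dim (W (\<nu> + 1)) = dim (W \<nu>)" for \<nu>
  proof (rule antisym)
    have "\<nu> + of_int (int n - 2 * int 0) = \<nu> + 1 + 2 * of_int (int t)" by (simp add: t)
    then have "P 0 x \<in> W (\<nu> + 1 + 2 * of_int (int t))" if "x \<in> W \<nu>" for x
      using P_wspace[OF le0 that] by (simp add: add.assoc)
    then have "dim (W \<nu>) \<le> dim (W (\<nu> + 1 + 2 * of_int (int t)))"
      by (rule linear_inj_dim_le(2)[OF linear_P[OF le0] inj_P0[OF assms] _ fin_dim_wspace[OF assms(2,3)]])
    then show "dim (W \<nu>) \<le> dim (W (\<nu> + 1))"
      using dim_wspace_shift_even[OF assms(2,3), of "\<nu> + 1" "int t"] by simp
    have shift: "\<nu> + 1 + of_int (int n - 2 * int n) = \<nu> + 2 * of_int (- int t)" by (simp add: t)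
    have "P n x \<in> W (\<nu> + 2 * of_int (- int t))" if "x \<in> W (\<nu> + 1)" for x
      using P_wspace[OF order_refl that] by (simp only: shift)
    then have "dim (W (\<nu> + 1)) \<le> dim (W (\<nu> + 2 * of_int (- int t)))"
      by (rule linear_inj_dim_le(2)[OF linear_P[OF order_refl] inj_Pn[OF assms] _ fin_dim_wspace[OF assms(2,3)]])
    then show "dim (W (\<nu> + 1)) \<le> dim (W \<nu>)"
      using dim_wspace_shift_even[OF assms(2,3), of \<nu> "- int t"] by simp
  qed
  show ?thesis
  proof (induction i rule: int_induct[where k = 0])
    case (step1 i)
    then show ?case using step[of "\<mu> + of_int i"] by (simp add: algebra_simps)
  next
    case (step2 i)
    then show ?case using step[of "\<mu> + of_int (i - 1)"] by (simp add: algebra_simps)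
  qed simp
qed

end

theorem mainTheorem12:
  fixes n :: nat and s :: "complex \<Rightarrow> 'v::ab_group_add \<Rightarrow> 'v"
    and E H F :: "'v \<Rightarrow> 'v" and P :: "nat \<Rightarrow> 'v \<Rightarrow> 'v" and lam :: complex
  assumes "gmod n s E H F P"
    and "simple_mod n s E H F P"
    and "weight_mod s H"
    and "\<forall>\<mu>\<in>supp s H. \<mu> - lam \<in> \<int>"
    and "wspace s H lam \<noteq> {0}" and "fin_dim s (wspace s H lam)"
    and "\<exists>k\<le>n. \<exists>v. P k v \<noteq> 0"
  shows "(\<not> highest_mod n s E H F P \<longrightarrow> inj E) \<and>
         (\<not> lowest_mod n s E H F P \<longrightarrow> inj F) \<and>
         (\<not> highest_mod n s E H F P \<and> \<not> lowest_mod n s E H F P \<longrightarrow>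
            bij E \<and> bij F \<and>
            (\<forall>\<mu>\<in>supp s H. \<forall>i::int.
               vector_space.dim s (wspace s H (\<mu> + 2 * of_int i)) = vector_space.dim s (wspace s H \<mu>)) \<and>
            (odd n \<longrightarrow> (\<forall>\<mu>\<in>supp s H. \<forall>i::int.
               vector_space.dim s (wspace s H (\<mu> + of_int i)) = vector_space.dim s (wspace s H \<mu>))))"
proof -
  interpret simple_weight_g_module s E H F n P lam
    using assms unfolding simple_weight_g_module_def simple_weight_g_module_axioms_def
      gmod_iff_g_module by blast
  show ?thesis
    using inj_E_if_not_highest inj_F_if_not_lowest bij_E_F dim_wspace_shift_even dim_wspace_shift_odd
    by blast
qed

end
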